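(* Assume conditions (C1), (C2) and (C3) hold. Then the sequence $\{x_n\}$ generated by Algorithm 3.1 converges weakly to some element of $\Omega$.
   Context: Let $H$ be a real Hilbert space, $A:H\to H$ a single-valued mapping and $B:H\to 2^H$ a set-valued mapping, and let $\Omega:=(A+B)^{-1}(0)=\{x\in H:\ 0\in Ax+Bx\}$. Algorithm 3.1 is the following iteration. Fix $x_0,x_1\in H$, $\mu\in(0,1)$, $\lambda_1>0$, real sequences $\{\alpha_n\},\{\beta_n\},\{\theta_n\}$ and nonnegative real sequences $\{\mu_n\},\{p_n\}$. For $n=1,2,\dots$ compute $w_n=x_n+\alpha_n(x_n-x_{n-1})$, $z_n=x_n+\beta_n(x_n-x_{n-1})$, $y_n=(I+\lambda_nB)^{-1}(I-\lambda_nA)w_n$, and set $\lambda_{n+1}=\min\{(\mu_n+\mu)\|w_n-y_n\|/\|Aw_n-Ay_n\|,\ \lambda_n+p_n\}$ if $Aw_n\neq Ay_n$, and $\lambda_{n+1}=\lambda_n+p_n$ otherwise. If $w_n=y_n$ the algorithm stops (then $y_n\in\Omega$). Otherwise set $x_{n+1}=(1-\theta_n)z_n+\theta_n\big(y_n-\lambda_n(Ay_n-Aw_n)\big)$ and continue. Here $I$ is the identity and $(I+\lambda B)^{-1}$ is the resolvent of $B$. Throughout, it is assumed that the algorithm does not stop, so that infinite sequences $\{x_n\},\{w_n\},\{z_n\},\{y_n\},\{\lambda_n\}$ are generated. Condition (C1): $\Omega\neq\emptyset$. Condition (C2): $A$ is $L$-Lipschitz continuous and monotone, and $B$ is maximal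 monotone. Condition (C3): there is $\varepsilon\in(1,\infty)$ such that (i) $0\le\alpha_n\le1$; (ii) $0\le\beta_n\le\beta_{n+1}\le\beta<\frac{3+2\varepsilon-\sqrt{8\varepsilon+17}}{2\varepsilon}$ for some constant $\beta$; (iii) $0<\theta<\theta_n\le\theta_{n+1}\le\frac{1}{1+\varepsilon}$ for some constant $\theta$; (iv) $a_n:=(1-\theta_n)\beta_n+\theta_n\alpha_n$ is non-decreasing; (v) $\sum_{n=1}^\infty p_n<\infty$ and $\lim_{n\to\infty}\mu_n=0$. *)

theory Defs
  imports "HOL-Analysis.Analysis"
begin

definition weak_conv :: "(nat \<Rightarrow> 'a::real_inner) \<Rightarrow> 'a \<Rightarrow> bool" where
  "weak_conv x p \<longleftrightarrow> (\<forall>v. (\<lambda>n. x n \<bullet> v) \<longlonglongrightarrow> p \<bullet> v)"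

definition monotone_op :: "('a::real_inner \<Rightarrow> 'a) \<Rightarrow> bool" where
  "monotone_op A \<longleftrightarrow> (\<forall>x y. (A x - A y) \<bullet> (x - y) \<ge> 0)"

definition monotone_setop :: "('a::real_inner \<Rightarrow> 'a set) \<Rightarrow> bool" where
  "monotone_setop B \<longleftrightarrow> (\<forall>x y u v. u \<in> B x \<longrightarrow> v \<in> B y \<longrightarrow> (u - v) \<bullet> (x - y) \<ge> 0)"

definition maximal_monotone :: "('a::real_inner \<Rightarrow> 'a set) \<Rightarrow> bool" where
  "maximal_monotone B \<longleftrightarrow> monotone_setop B \<and>
     (\<forall>B'. monotone_setop B' \<and> (\<forall>x. B x \<subseteq> B' x) \<longrightarrow> B' = B)"

text \<open>Resolvent (I + lam B)^{-1} x: the (unique, for maximal monotone B and lam > 0)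
  y with x \<in> y + lam B y.\<close>
definition resolvent :: "('a::real_inner \<Rightarrow> 'a set) \<Rightarrow> real \<Rightarrow> 'a \<Rightarrow> 'a" where
  "resolvent B lam x = (THE y. \<exists>b\<in>B y. x = y + lam *\<^sub>R b)"

definition zeros_sum :: "('a::real_inner \<Rightarrow> 'a) \<Rightarrow> ('a \<Rightarrow> 'a set) \<Rightarrow> 'a set" where
  "zeros_sum A B = {x. \<exists>b\<in>B x. A x + b = 0}"

end

theory Submission
  imports Defs
begin

text \<open>Along the iteration, for every zero p of A + B the quantity
  \<Gamma>_n = |x_n - p|^2 - a_n |x_(n-1) - p|^2 + F_(n-1) |x_n - x_(n-1)|^2 is eventually nonincreasing and
  drops by a multiple of |x_n - x_(n-1)|^2 + |w_n - y_n|^2; the constraints (C3) on the parameters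
  are exactly what makes the coefficients positive. Hence both squared quantities are summable, the
  distances |x_n - p| converge (Alvarez-Attouch), and the cluster points of x_n are zeros because
  the resolvent step places y_n in the graph of A + B up to an error of order |w_n - y_n|.
  Opial's lemma then gives weak convergence.

  HOL-Analysis has neither weak compactness in Hilbert spaces nor Minty's theorem. Both are derived
  here from minimum norm points of closed convex sets: bounded closed convex sets have the finite
  intersection property, which yields Minty's theorem (I + \<lambda>B is onto, so the resolvent is well
  defined), and weak cluster points are replaced by points in the closed convex hull of every tail
  of a subsequence.\<close>

section \<open>Minimum norm points and intersections of closed convex sets\<close>

lemma Cauchy_if_dist_sq_le_null:
  fixes d :: "nat \<Rightarrow> 'a::metric_space"
  assumes dist: "\<And>k l. k \<le> l \<Longrightarrow> (dist (d k) (d l))^2 \<le> r k" and r: "r \<longlonglongrightarrow> 0"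
  shows "Cauchy d"
proof (rule metric_CauchyI)
  fix e :: real assume e: "e > 0"
  then obtain N where N: "\<And>n. n \<ge> N \<Longrightarrow> r n < e^2"
    using order_tendstoD(2)[OF r, of "e^2"] by (auto simp: eventually_sequentially)
  have close: "dist (d k) (d l) < e" if "N \<le> k" "k \<le> l" for k l
  proof -
    have "(dist (d k) (d l))^2 < e^2" using dist[OF that(2)] N[OF that(1)] by linarith
    then show ?thesis using e by (simp add: power_less_imp_less_base)
  qed
  show "\<exists>M. \<forall>m\<ge>M. \<forall>n\<ge>M. dist (d m) (d n) < e"
    using close by (metis dist_commute nat_le_linear)
qed

lemma tendsto_if_dist_sq_le_null:
  fixes d e :: "nat \<Rightarrow> 'a::real_normed_vector"
  assumes dist: "\<And>k. (dist (e k) (d k))^2 \<le> r k" and r: "r \<longlonglongrightarrow> 0" and d: "d \<longlonglongrightarrow> l"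
  shows "e \<longlonglongrightarrow> l"
proof (rule Lim_transform[OF d])
  have "(\<lambda>k. sqrt (r k)) \<longlonglongrightarrow> 0" using tendsto_real_sqrt[OF r] by simp
  moreover have "\<forall>\<^sub>F k in sequentially. norm (e k - d k) \<le> sqrt (r k)"
    using real_le_rsqrt[OF dist] by (simp add: dist_norm)
  ultimately show "(\<lambda>k. e k - d k) \<longlonglongrightarrow> 0"
    by (rule Lim_null_comparison[rotated])
qed

lemma midpoint_strongly_convex_attains_min:
  fixes f :: "'a::{real_normed_vector,complete_space} \<Rightarrow> real"
  assumes S: "closed S" "S \<noteq> {}" "\<And>x y. x \<in> S \<Longrightarrow> y \<in> S \<Longrightarrow> (1/2) *\<^sub>R (x + y) \<in> S"
    and cont: "continuous_on S f" and bdd: "bdd_below (f ` S)" and c: "c > 0"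
    and strong: "\<And>x y. x \<in> S \<Longrightarrow> y \<in> S \<Longrightarrow>
      f ((1/2) *\<^sub>R (x + y)) \<le> (f x + f y) / 2 - c * (norm (x - y))^2"
  shows "\<exists>x\<in>S. \<forall>y\<in>S. f x \<le> f y"
proof -
  define m where "m = Inf (f ` S)"
  have m_le: "m \<le> f x" if "x \<in> S" for x
    unfolding m_def using bdd that by (rule cINF_lower)
  have "\<exists>x\<in>S. f x < m + inverse (real (Suc n))" for n
    using cInf_lessD[of "f ` S" "m + inverse (real (Suc n))"] S(2) by (auto simp: m_def)
  then obtain xs where xs: "\<And>n. xs n \<in> S" "\<And>n. f (xs n) < m + inverse (real (Suc n))"
    by metis
  have "(dist (xs k) (xs l))^2 \<le> inverse (real (Suc k)) / c" if "k \<le> l" for k l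
  proof -
    have "inverse (real (Suc l)) \<le> inverse (real (Suc k))"
      using that by (simp add: le_imp_inverse_le)
    have "m \<le> f ((1/2) *\<^sub>R (xs k + xs l))" using m_le S(3) xs(1) by blast
    also have "\<dots> \<le> (f (xs k) + f (xs l)) / 2 - c * (dist (xs k) (xs l))^2"
      using strong xs(1) by (simp add: dist_norm)
    finally have "c * (dist (xs k) (xs l))^2 \<le> inverse (real (Suc k))"
      using xs(2)[of k] xs(2)[of l] \<open>inverse (real (Suc l)) \<le> _\<close> by argo
    then show ?thesis using c by (simp add: pos_le_divide_eq mult.commute)
  qed
  moreover have "(\<lambda>k. inverse (real (Suc k)) / c) \<longlonglongrightarrow> 0"
    using tendsto_divide_zero[OF LIMSEQ_inverse_real_of_nat] .
  ultimately have "Cauchy xs" by (rule Cauchy_if_dist_sq_le_null)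
  then obtain x where x: "xs \<longlonglongrightarrow> x" using Cauchy_convergent_iff convergent_def by blast
  have "x \<in> S" using closed_sequentially[OF S(1)] xs(1) x by blast
  have "(\<lambda>n. f (xs n)) \<longlonglongrightarrow> f x"
    using continuous_on_tendsto_compose[OF cont x \<open>x \<in> S\<close>] xs(1) by simp
  then have "f x \<le> m"
    by (rule LIMSEQ_le[OF _ LIMSEQ_inverse_real_of_nat_add]) (use xs(2) less_imp_le in blast)
  then show ?thesis using \<open>x \<in> S\<close> m_le by force
qed

lemma closed_convex_has_min_norm_point:
  fixes S :: "'a::{real_inner,complete_space} set"
  assumes S: "closed S" "convex S" "S \<noteq> {}"
  shows "\<exists>c\<in>S. \<forall>s\<in>S. (s - c) \<bullet> c \<ge> 0"
proof -
  have mid: "(1/2) *\<^sub>R (x + y) \<in> S" if "x \<in> S" "y \<in> S" for x y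
    using convexD[OF S(2) that, of "1/2" "1/2"] by (simp add: scaleR_add_right)
  have parallelogram: "(norm ((1/2) *\<^sub>R (x + y)))^2 = ((norm x)^2 + (norm y)^2) / 2 - 1/4 * (norm (x - y))^2"
    for x y :: 'a
    by (simp add: power2_norm_eq_inner inner_add_left inner_add_right inner_diff_left
        inner_diff_right inner_commute algebra_simps)
  have "\<exists>c\<in>S. \<forall>y\<in>S. (norm c)^2 \<le> (norm y)^2"
    by (rule midpoint_strongly_convex_attains_min[of S _ "1/4"])
      (use S mid parallelogram in \<open>auto intro!: continuous_intros bdd_belowI[of _ 0]\<close>)
  then obtain c where c: "c \<in> S" "\<And>y. y \<in> S \<Longrightarrow> (norm c)^2 \<le> (norm y)^2" by blast
  have "(s - c) \<bullet> c \<ge> 0" if s: "s \<in> S" for s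
  proof (rule ccontr)
    define d where "d = s - c"
    assume "\<not> (s - c) \<bullet> c \<ge> 0"
    then have dc: "d \<bullet> c < 0" by (simp add: d_def)
    then have nd: "(norm d)^2 > 0" by auto
    define t where "t = min 1 (- (d \<bullet> c) / (norm d)^2)"
    have t: "0 < t" "t \<le> 1" using dc nd by (auto simp: t_def divide_neg_pos)
    have t_le: "t * (norm d)^2 \<le> - (d \<bullet> c)"
      using nd by (simp add: t_def min_def divide_simps split: if_splits)
    \<comment> \<open>moving from c a short way towards s decreases the norm\<close>
    have "c + t *\<^sub>R d = (1 - t) *\<^sub>R c + t *\<^sub>R s" by (simp add: d_def algebra_simps)
    then have "c + t *\<^sub>R d \<in> S" using convexD[OF S(2) c(1) s, of "1 - t" t] t by simp
    have "(norm (c + t *\<^sub>R d))^2 = (norm c)^2 + 2 * t * (d \<bullet> c) + t * (t * (norm d)^2)"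
      by (simp add: power2_norm_eq_inner inner_add_left inner_add_right inner_commute algebra_simps)
    also have "\<dots> \<le> (norm c)^2 + 2 * t * (d \<bullet> c) + t * (- (d \<bullet> c))"
      using t_le t by (intro add_left_mono mult_left_mono) auto
    also have "\<dots> < (norm c)^2" using t dc by (simp add: algebra_simps mult_pos_neg)
    finally show False using c(2)[OF \<open>c + t *\<^sub>R d \<in> S\<close>] by simp
  qed
  then show ?thesis using c(1) by blast
qed

lemma norm_diff_sq_le_if_obtuse:
  fixes c c' :: "'a::real_inner"
  assumes "(c' - c) \<bullet> c \<ge> 0"
  shows "(norm (c' - c))^2 \<le> (norm c')^2 - (norm c)^2"
proof -
  have "(norm c')^2 = (norm (c' - c))^2 + 2 * ((c' - c) \<bullet> c) + (norm c)^2"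
    by (simp add: power2_norm_eq_inner inner_diff_left inner_diff_right inner_commute algebra_simps)
  then show ?thesis using assms by linarith
qed

lemma norm_sq_increasing_family_converges:
  fixes c :: "'i set \<Rightarrow> 'a::{real_inner,complete_space}"
  assumes mono: "\<And>J J'. finite J' \<Longrightarrow> J' \<subseteq> I \<Longrightarrow> J \<subseteq> J' \<Longrightarrow>
      (norm (c J' - c J))^2 \<le> (norm (c J'))^2 - (norm (c J))^2"
    and bdd: "\<And>J. finite J \<Longrightarrow> J \<subseteq> I \<Longrightarrow> norm (c J) \<le> R"
  shows "\<exists>H d. (\<forall>k. finite (H k) \<and> H k \<subseteq> I) \<and>
    (\<forall>E. (\<forall>k. finite (E k) \<and> E k \<subseteq> I \<and> H k \<subseteq> E k) \<longrightarrow> (\<lambda>k. c (E k)) \<longlonglongrightarrow> d)"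
proof -
  define F where "F = {J. finite J \<and> J \<subseteq> I}"
  define s where "s = (SUP J\<in>F. (norm (c J))^2)"
  have "(norm (c J))^2 \<le> R^2" if "J \<in> F" for J
    using bdd[of J] that by (intro power_mono) (auto simp: F_def)
  then have bdd_s: "bdd_above ((\<lambda>J. (norm (c J))^2) ` F)" by (rule bdd_aboveI2)
  have le_s: "(norm (c J))^2 \<le> s" if "J \<in> F" for J
    unfolding s_def by (rule cSUP_upper[OF that bdd_s])
  have "{} \<in> F" by (simp add: F_def)
  then have "\<exists>J\<in>F. s - inverse (real (Suc k)) < (norm (c J))^2" for k
    using less_cSupD[of "(\<lambda>J. (norm (c J))^2) ` F" "s - inverse (real (Suc k))"]
    by (auto simp: s_def)
  then obtain G where G: "\<And>k. G k \<in> F" "\<And>k. s - inverse (real (Suc k)) < (norm (c (G k)))^2"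
    by metis
  define H where "H k = (\<Union>j\<le>k. G j)" for k
  have H: "H k \<in> F" for k using G(1) by (auto simp: H_def F_def)
  have H_mono: "H k \<subseteq> H l" if "k \<le> l" for k l unfolding H_def using that by (intro UN_mono) auto
  have near: "(dist (c J) (c (H k)))^2 \<le> inverse (real (Suc k))" if J: "J \<in> F" "H k \<subseteq> J" for J k
  proof -
    have "G k \<subseteq> H k" by (auto simp: H_def)
    then have "(norm (c (H k) - c (G k)))^2 \<le> (norm (c (H k)))^2 - (norm (c (G k)))^2"
      using H[of k] by (intro mono) (auto simp: F_def)
    moreover have "(norm (c J - c (H k)))^2 \<le> (norm (c J))^2 - (norm (c (H k)))^2"
      using J by (intro mono) (auto simp: F_def)
    moreover have "0 \<le> (norm (c (H k) - c (G k)))^2" by simp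
    ultimately show ?thesis using le_s[OF J(1)] G(2)[of k] unfolding dist_norm by linarith
  qed
  have "Cauchy (\<lambda>k. c (H k))"
    using near[OF H H_mono] LIMSEQ_inverse_real_of_nat
    by (intro Cauchy_if_dist_sq_le_null) (simp_all add: dist_commute)
  then obtain d where d: "(\<lambda>k. c (H k)) \<longlonglongrightarrow> d" using Cauchy_convergent_iff convergent_def by blast
  have "(\<lambda>k. c (E k)) \<longlonglongrightarrow> d" if E: "\<forall>k. finite (E k) \<and> E k \<subseteq> I \<and> H k \<subseteq> E k" for E
  proof (rule tendsto_if_dist_sq_le_null[OF _ LIMSEQ_inverse_real_of_nat d])
    show "(dist (c (E k)) (c (H k)))^2 \<le> inverse (real (Suc k))" for k
      using near[of "E k" k] E by (simp add: F_def)
  qed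
  then show ?thesis using H by (auto simp: F_def)
qed

text \<open>This replaces weak compactness of bounded closed convex sets: the minimum norm points of
  the finite intersections converge strongly.\<close>
lemma closed_convex_family_Inter_nonempty:
  fixes K :: "'i \<Rightarrow> 'a::{real_inner,complete_space} set"
  assumes closed: "\<And>i. i \<in> I \<Longrightarrow> closed (K i)" and convex: "\<And>i. i \<in> I \<Longrightarrow> convex (K i)"
    and i0: "i0 \<in> I" "bounded (K i0)"
    and fip: "\<And>J. finite J \<Longrightarrow> J \<subseteq> I \<Longrightarrow> (\<Inter>i\<in>insert i0 J. K i) \<noteq> {}"
  shows "(\<Inter>i\<in>I. K i) \<noteq> {}"
proof -
  define C where "C J = (\<Inter>i\<in>insert i0 J. K i)" for J
  have C: "closed (C J)" "convex (C J)" "C J \<noteq> {}" if "finite J" "J \<subseteq> I" for J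
  proof -
    have "insert i0 J \<subseteq> I" using that i0(1) by simp
    then show "closed (C J)" unfolding C_def using closed by (intro closed_INT) auto
    from \<open>insert i0 J \<subseteq> I\<close> show "convex (C J)" unfolding C_def using convex
      by (intro convex_INT) auto
    show "C J \<noteq> {}" unfolding C_def by (rule fip[OF that])
  qed
  define c where "c J = (SOME c. c \<in> C J \<and> (\<forall>s\<in>C J. (s - c) \<bullet> c \<ge> 0))" for J
  have c: "c J \<in> C J" "\<And>s. s \<in> C J \<Longrightarrow> (s - c J) \<bullet> c J \<ge> 0" if "finite J" "J \<subseteq> I" for J
  proof -
    have "\<exists>c. c \<in> C J \<and> (\<forall>s\<in>C J. (s - c) \<bullet> c \<ge> 0)"
      using closed_convex_has_min_norm_point[OF C[OF that]] by blast
    from someI_ex[OF this] show "c J \<in> C J" "\<And>s. s \<in> C J \<Longrightarrow> (s - c J) \<bullet> c J \<ge> 0"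
      by (simp_all add: c_def)
  qed
  obtain R where R: "\<And>x. x \<in> K i0 \<Longrightarrow> norm x \<le> R" using i0(2) bounded_iff by blast
  have mono: "(norm (c J' - c J))^2 \<le> (norm (c J'))^2 - (norm (c J))^2"
    if J': "finite J'" "J' \<subseteq> I" and "J \<subseteq> J'" for J J'
  proof -
    have J: "finite J" "J \<subseteq> I" using that finite_subset[OF \<open>J \<subseteq> J'\<close> J'(1)] by auto
    have "c J' \<in> C J" using c(1)[OF J'] \<open>J \<subseteq> J'\<close> by (auto simp: C_def)
    then show ?thesis by (intro norm_diff_sq_le_if_obtuse c(2)[OF J])
  qed
  have bdd: "norm (c J) \<le> R" if "finite J" "J \<subseteq> I" for J
    using c(1)[OF that] R by (auto simp: C_def)
  have "\<exists>H d. (\<forall>k. finite (H k) \<and> H k \<subseteq> I) \<and>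
      (\<forall>E. (\<forall>k. finite (E k) \<and> E k \<subseteq> I \<and> H k \<subseteq> E k) \<longrightarrow> (\<lambda>k. c (E k)) \<longlonglongrightarrow> d)"
    using mono bdd by (rule norm_sq_increasing_family_converges)
  then obtain H d where H: "\<forall>k. finite (H k) \<and> H k \<subseteq> I"
      and lim: "\<forall>E. (\<forall>k. finite (E k) \<and> E k \<subseteq> I \<and> H k \<subseteq> E k) \<longrightarrow> (\<lambda>k. c (E k)) \<longlonglongrightarrow> d"
    by (elim exE conjE)
  have "d \<in> K i" if "i \<in> I" for i
  proof -
    have "c (insert i (H k)) \<in> K i" for k using c(1) H that by (auto simp: C_def)
    moreover have "(\<lambda>k. c (insert i (H k))) \<longlonglongrightarrow> d" using H that by (intro lim[rule_format]) auto
    ultimately show ?thesis by (rule closed_sequentially[OF closed[OF that]])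
  qed
  then show ?thesis by blast
qed

section \<open>Minty's theorem and resolvents\<close>

lemma inner_convex_combination_le_if_monotone:
  fixes A B :: "'i \<Rightarrow> 'a::real_inner"
  assumes fin: "finite G" and u: "\<And>g. g \<in> G \<Longrightarrow> u g \<ge> 0" and sum_u: "sum u G = 1"
    and mono: "\<And>g g'. g \<in> G \<Longrightarrow> g' \<in> G \<Longrightarrow> (A g - A g') \<bullet> (B g - B g') \<ge> 0"
  shows "(\<Sum>g\<in>G. u g *\<^sub>R A g) \<bullet> (\<Sum>g\<in>G. u g *\<^sub>R B g) \<le> (\<Sum>g\<in>G. u g * (A g \<bullet> B g))"
proof -
  define S where "S = (\<Sum>g\<in>G. u g * (A g \<bullet> B g))"
  define X where "X = (\<Sum>g\<in>G. u g *\<^sub>R A g) \<bullet> (\<Sum>g\<in>G. u g *\<^sub>R B g)"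
  have "0 \<le> (\<Sum>g\<in>G. \<Sum>g'\<in>G. u g * u g' * ((A g - A g') \<bullet> (B g - B g')))"
    using u mono by (intro sum_nonneg mult_nonneg_nonneg) auto
  also have "\<dots> = (\<Sum>g\<in>G. \<Sum>g'\<in>G. u g * u g' * (A g \<bullet> B g))
      - (\<Sum>g\<in>G. \<Sum>g'\<in>G. u g * u g' * (A g \<bullet> B g'))
      - (\<Sum>g\<in>G. \<Sum>g'\<in>G. u g * u g' * (A g' \<bullet> B g))
      + (\<Sum>g\<in>G. \<Sum>g'\<in>G. u g * u g' * (A g' \<bullet> B g'))"
    by (simp add: inner_diff_left inner_diff_right algebra_simps sum_subtractf sum.distrib)
  also have "(\<Sum>g\<in>G. \<Sum>g'\<in>G. u g * u g' * (A g \<bullet> B g)) = S"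
    by (simp add: S_def sum_distrib_left[symmetric] sum_distrib_right[symmetric] sum_u mult.assoc)
  also have "(\<Sum>g\<in>G. \<Sum>g'\<in>G. u g * u g' * (A g' \<bullet> B g')) = S"
    by (subst sum.swap) (simp add: S_def mult.assoc sum_distrib_right[symmetric] sum_u)
  also have "(\<Sum>g\<in>G. \<Sum>g'\<in>G. u g * u g' * (A g \<bullet> B g')) = X"
    by (subst sum.swap)
      (simp add: X_def inner_sum_left inner_sum_right sum_distrib_left mult.assoc mult.left_commute)
  also have "(\<Sum>g\<in>G. \<Sum>g'\<in>G. u g * u g' * (A g' \<bullet> B g)) = X"
    by (simp add: X_def inner_sum_left inner_sum_right sum_distrib_left mult.assoc)
  finally show ?thesis unfolding S_def[symmetric] X_def[symmetric] by linarith
qed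

lemma continuous_on_Max:
  fixes f :: "'i \<Rightarrow> 'a::topological_space \<Rightarrow> real"
  assumes "finite P" "P \<noteq> {}" "\<And>i. i \<in> P \<Longrightarrow> continuous_on S (f i)"
  shows "continuous_on S (\<lambda>x. Max ((\<lambda>i. f i x) ` P))"
  using assms
proof (induction P rule: finite_ne_induct)
  case (insert i F)
  then have "continuous_on S (\<lambda>x. max (f i x) (Max ((\<lambda>i. f i x) ` F)))"
    by (intro continuous_on_max) auto
  then show ?case using insert by simp
qed simp

text \<open>2 x0 + b - a is the gradient of x \<mapsto> (x + b) \<bullet> (x - a) at x0. If the minimum norm point p
  of the hull of the active gradients were nonzero, -p would be a common descent direction of all
  active pieces.\<close>
lemma zero_in_hull_of_active_gradients:
  fixes P :: "('a::{real_inner,complete_space} \<times> 'a) set"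
  assumes fin: "finite P"
    and le_m: "\<And>a b. (a, b) \<in> P \<Longrightarrow> (x0 + b) \<bullet> (x0 - a) \<le> m"
    and ge_m: "\<And>x. \<exists>(a, b)\<in>P. m \<le> (x + b) \<bullet> (x - a)"
  shows "0 \<in> convex hull ((\<lambda>(a, b). 2 *\<^sub>R x0 + b - a) ` {(a, b) \<in> P. (x0 + b) \<bullet> (x0 - a) = m})"
    (is "0 \<in> convex hull ?G")
proof (rule ccontr)
  assume zero_notin: "0 \<notin> convex hull ?G"
  have "finite ?G" by (intro finite_imageI finite_subset[OF _ fin]) auto
  moreover have "?G \<noteq> {}" using ge_m[of x0] le_m by fastforce
  ultimately obtain p where p: "p \<in> convex hull ?G" "\<And>q. q \<in> convex hull ?G \<Longrightarrow> (q - p) \<bullet> p \<ge> 0"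
    using closed_convex_has_min_norm_point[of "convex hull ?G"]
    by (auto simp: compact_imp_closed finite_imp_compact_convex_hull)
  have "p \<noteq> 0" using p(1) zero_notin by auto
  then have pp: "p \<bullet> p > 0" by simp
  have expand: "(x0 - t *\<^sub>R p + b) \<bullet> (x0 - t *\<^sub>R p - a)
      = (x0 + b) \<bullet> (x0 - a) - t * ((2 *\<^sub>R x0 + b - a) \<bullet> p) + t^2 * (p \<bullet> p)" for t and a b :: 'a
    by (simp add: power2_eq_square inner_add_left inner_add_right inner_diff_left inner_diff_right
        inner_commute algebra_simps)
  have descent: "\<forall>\<^sub>F t in at_right 0. (x0 - t *\<^sub>R p + b) \<bullet> (x0 - t *\<^sub>R p - a) < m"
    if ab: "(a, b) \<in> P" for a b
  proof (cases "(x0 + b) \<bullet> (x0 - a) = m")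
    case True
    then have "2 *\<^sub>R x0 + b - a \<in> convex hull ?G"
      using ab by (intro hull_inc) (auto intro!: image_eqI[of _ _ "(a, b)"])
    then have grad: "p \<bullet> p \<le> (2 *\<^sub>R x0 + b - a) \<bullet> p" using p(2) by (fastforce simp: inner_diff_left)
    have "\<forall>\<^sub>F t in at_right (0::real). t \<in> {0<..<1}" by (rule eventually_at_right_real) simp
    then show ?thesis
    proof (rule eventually_mono)
      fix t :: real assume t: "t \<in> {0<..<1}"
      have "t^2 * (p \<bullet> p) < t * (p \<bullet> p)" using t pp by (simp add: power2_eq_square)
      moreover have "t * (p \<bullet> p) \<le> t * ((2 *\<^sub>R x0 + b - a) \<bullet> p)" using t grad by simp
      ultimately show "(x0 - t *\<^sub>R p + b) \<bullet> (x0 - t *\<^sub>R p - a) < m" unfolding expand True by linarith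
    qed
  next
    case False
    then have "(x0 + b) \<bullet> (x0 - a) < m" using le_m[OF ab] by simp
    moreover have "((\<lambda>t. (x0 - t *\<^sub>R p + b) \<bullet> (x0 - t *\<^sub>R p - a)) \<longlongrightarrow> (x0 + b) \<bullet> (x0 - a)) (at_right 0)"
      by (intro tendsto_eq_intros) auto
    ultimately show ?thesis by (simp add: order_tendstoD(2))
  qed
  have "\<forall>\<^sub>F t in at_right 0. \<forall>(a, b)\<in>P. (x0 - t *\<^sub>R p + b) \<bullet> (x0 - t *\<^sub>R p - a) < m"
    using fin descent by (auto intro: eventually_ball_finite)
  then obtain t :: real where "\<forall>(a, b)\<in>P. (x0 - t *\<^sub>R p + b) \<bullet> (x0 - t *\<^sub>R p - a) < m"
    using eventually_happens trivial_limit_at_right_real by blast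
  then show False using ge_m[of "x0 - t *\<^sub>R p"] by fastforce
qed

lemma finite_monotone_minty:
  fixes P :: "('a::{real_inner,complete_space} \<times> 'a) set"
  assumes fin: "finite P"
    and mono: "\<And>a b a' b'. (a, b) \<in> P \<Longrightarrow> (a', b') \<in> P \<Longrightarrow> (a - a') \<bullet> (b - b') \<ge> 0"
  shows "\<exists>x. \<forall>(a, b)\<in>P. (x + b) \<bullet> (x - a) \<le> 0"
proof (cases "P = {}")
  case False
  define h where "h ab x = (x + snd ab) \<bullet> (x - fst ab)" for ab and x :: 'a
  define \<phi> where "\<phi> x = Max ((\<lambda>ab. h ab x) ` P)" for x
  have h_le: "h ab x \<le> \<phi> x" if "ab \<in> P" for ab x
    unfolding \<phi>_def using fin that by (intro Max_ge) auto
  have \<phi>_attained: "\<exists>ab\<in>P. \<phi> x = h ab x" for x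
  proof -
    have "\<phi> x \<in> (\<lambda>ab. h ab x) ` P" unfolding \<phi>_def using fin False by (intro Max_in) auto
    then show ?thesis by auto
  qed
  have h_midpoint: "h ab ((1/2) *\<^sub>R (x + y)) = (h ab x + h ab y) / 2 - 1/4 * (norm (x - y))^2" for ab x y
    unfolding h_def
    by (simp add: power2_norm_eq_inner inner_add_left inner_add_right inner_diff_left
        inner_diff_right inner_commute algebra_simps) argo
  have h_lower: "h ab x \<ge> - ((norm (snd ab - fst ab))^2 / 4) - snd ab \<bullet> fst ab" for ab x
  proof -
    have "h ab x = (norm (x + (1/2) *\<^sub>R (snd ab - fst ab)))^2 - (norm (snd ab - fst ab))^2 / 4
        - snd ab \<bullet> fst ab"
      unfolding h_def
      by (simp add: power2_norm_eq_inner inner_add_left inner_add_right inner_diff_left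
          inner_diff_right inner_commute algebra_simps) argo
    then show ?thesis by simp
  qed
  obtain ab0 where "ab0 \<in> P" using False by blast
  have "\<exists>x0\<in>UNIV. \<forall>y\<in>UNIV. \<phi> x0 \<le> \<phi> y"
  proof (rule midpoint_strongly_convex_attains_min[of UNIV \<phi> "1/4"])
    show "continuous_on UNIV \<phi>"
      unfolding \<phi>_def h_def using fin False
        by (intro continuous_on_Max) (auto intro!: continuous_intros)
    show "bdd_below (\<phi> ` UNIV)"
      using h_le[OF \<open>ab0 \<in> P\<close>] h_lower[of ab0] by (intro bdd_belowI2) (rule order_trans)
    show "\<phi> ((1/2) *\<^sub>R (x + y)) \<le> (\<phi> x + \<phi> y) / 2 - 1/4 * (norm (x - y))^2" for x y
    proof -
      obtain ab where ab: "ab \<in> P" "\<phi> ((1/2) *\<^sub>R (x + y)) = h ab ((1/2) *\<^sub>R (x + y))"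
        using \<phi>_attained by blast
      then show ?thesis using h_midpoint[of ab x y] h_le[OF ab(1), of x] h_le[OF ab(1), of y]
        by argo
    qed
  qed auto
  then obtain x0 where x0: "\<And>y. \<phi> x0 \<le> \<phi> y" by blast
  define m where "m = \<phi> x0"
  define I where "I = {(a, b) \<in> P. (x0 + b) \<bullet> (x0 - a) = m}"
  have "0 \<in> convex hull ((\<lambda>(a, b). 2 *\<^sub>R x0 + b - a) ` I)"
    unfolding I_def
  proof (rule zero_in_hull_of_active_gradients[OF fin])
    show "(x0 + b) \<bullet> (x0 - a) \<le> m" if "(a, b) \<in> P" for a b
      using h_le[OF that] by (simp add: h_def m_def)
    show "\<exists>(a, b)\<in>P. m \<le> (x + b) \<bullet> (x - a)" for x
      using \<phi>_attained[of x] x0[of x] by (fastforce simp: h_def m_def)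
  qed
  \<comment> \<open>the gradient map is affine, so the convex combination can be taken over the pairs themselves\<close>
  also have "(\<lambda>(a, b). 2 *\<^sub>R x0 + b - a) ` I = (+) (2 *\<^sub>R x0) ` (\<lambda>ab. snd ab - fst ab) ` I"
    by (simp add: image_image case_prod_beta add_diff_eq)
  also have "convex hull \<dots> = (+) (2 *\<^sub>R x0) ` (\<lambda>ab. snd ab - fst ab) ` (convex hull I)"
    by (simp add: convex_hull_translation convex_hull_linear_image linear_compose_sub linear_fst linear_snd)
  finally obtain a' b' where ab': "(a', b') \<in> convex hull I" "a' = 2 *\<^sub>R x0 + b'"
    by (force simp: algebra_simps)
  have "finite I" unfolding I_def by (rule finite_subset[OF _ fin]) auto
  then obtain u where u: "\<And>ab. ab \<in> I \<Longrightarrow> 0 \<le> u ab" "sum u I = 1" "(\<Sum>ab\<in>I. u ab *\<^sub>R ab) = (a', b')"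
    using ab'(1) unfolding convex_hull_finite[OF \<open>finite I\<close>] by blast
  have a': "a' = (\<Sum>ab\<in>I. u ab *\<^sub>R fst ab)" and b': "b' = (\<Sum>ab\<in>I. u ab *\<^sub>R snd ab)"
    using arg_cong[OF u(3), of fst] arg_cong[OF u(3), of snd] by (simp_all add: fst_sum snd_sum)
  have "m = (\<Sum>ab\<in>I. u ab * h ab x0)"
    using u(2) by (simp add: I_def h_def case_prod_beta sum_distrib_right[symmetric])
  also have "\<dots> = x0 \<bullet> x0 - x0 \<bullet> a' + b' \<bullet> x0 - (\<Sum>ab\<in>I. u ab * (fst ab \<bullet> snd ab))"
    using u(2) by (simp add: a' b' h_def inner_add_left inner_diff_right inner_sum_left inner_sum_right
        inner_commute sum.distrib sum_subtractf algebra_simps sum_distrib_left[symmetric]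
        sum_distrib_right[symmetric])
  also have "\<dots> \<le> x0 \<bullet> x0 - x0 \<bullet> a' + b' \<bullet> x0 - a' \<bullet> b'"
    using inner_convex_combination_le_if_monotone[OF \<open>finite I\<close> u(1,2), of fst snd] mono
    by (force simp: a' b' I_def)
  also have "\<dots> = - ((x0 + b') \<bullet> (x0 + b'))"
    by (simp add: ab'(2) inner_add_left inner_add_right inner_commute algebra_simps)
  also have "\<dots> \<le> 0" by simp
  finally have "m \<le> 0" .
  then have "(x0 + b) \<bullet> (x0 - a) \<le> 0" if "(a, b) \<in> P" for a b
    using h_le[OF that, of x0] by (simp add: h_def m_def)
  then show ?thesis by blast
qed simp

lemma minty_ineq_iff_mem_cball:
  fixes x a b :: "'a::real_inner"
  shows "(x + b) \<bullet> (x - a) \<le> 0 \<longleftrightarrow> x \<in> cball ((1/2) *\<^sub>R (a - b)) (norm (a + b) / 2)"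
proof -
  have eq: "(x + b) \<bullet> (x - a) = (norm (x - (1/2) *\<^sub>R (a - b)))^2 - (norm (a + b) / 2)^2"
    by (simp add: power2_norm_eq_inner power_divide inner_add_left inner_add_right inner_diff_left
        inner_diff_right inner_commute algebra_simps)
  show ?thesis
    unfolding eq mem_cball dist_norm norm_minus_commute[of "(1/2) *\<^sub>R (a - b)"]
    using abs_le_square_iff[of "norm (x - (1/2) *\<^sub>R (a - b))" "norm (a + b) / 2"] by simp
qed

text \<open>(x + b) \<bullet> (x - a) \<le> 0 says that (x, -x) is monotonically related to (a, b). Each such
  inequality describes a closed ball, so the finite case extends to arbitrary P by the finite
  intersection property.\<close>
lemma monotone_minty:
  fixes P :: "('a::{real_inner,complete_space} \<times> 'a) set"
  assumes mono: "\<And>a b a' b'. (a, b) \<in> P \<Longrightarrow> (a', b') \<in> P \<Longrightarrow> (a - a') \<bullet> (b - b') \<ge> 0"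
  shows "\<exists>x. \<forall>(a, b)\<in>P. (x + b) \<bullet> (x - a) \<le> 0"
proof (cases "P = {}")
  case False
  then obtain ab0 where ab0: "ab0 \<in> P" by auto
  define K where "K ab = cball ((1/2) *\<^sub>R (fst ab - snd ab)) (norm (fst ab + snd ab) / 2)"
    for ab :: "'a \<times> 'a"
  have K_iff: "x \<in> K (a, b) \<longleftrightarrow> (x + b) \<bullet> (x - a) \<le> 0" for x a b
    unfolding K_def by (simp add: minty_ineq_iff_mem_cball)
  have "(\<Inter>ab\<in>P. K ab) \<noteq> {}"
  proof (rule closed_convex_family_Inter_nonempty[OF _ _ ab0])
    show "closed (K ab)" "convex (K ab)" "bounded (K ab0)" for ab by (simp_all add: K_def)
    fix J assume J: "finite J" "J \<subseteq> P"
    then obtain x where "\<forall>(a, b)\<in>insert ab0 J. (x + b) \<bullet> (x - a) \<le> 0"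
      using finite_monotone_minty[of "insert ab0 J"] ab0 mono by blast
    then have "x \<in> (\<Inter>ab\<in>insert ab0 J. K ab)" using K_iff by auto
    then show "(\<Inter>ab\<in>insert ab0 J. K ab) \<noteq> {}" by blast
  qed
  then show ?thesis using K_iff by blast
qed simp

lemma maximal_monotone_mem_if_monotonically_related:
  assumes max: "maximal_monotone B"
    and related: "\<And>a b. b \<in> B a \<Longrightarrow> (u - b) \<bullet> (y - a) \<ge> 0"
  shows "u \<in> B y"
proof -
  define B' where "B' = B(y := insert u (B y))"
  have "monotone_setop B"  using max by (simp add: maximal_monotone_def)
  moreover have "(u - b) \<bullet> (y - a) \<ge> 0 \<and> (b - u) \<bullet> (a - y) \<ge> 0" if "b \<in> B a" for a b
    using related[OF that]
      by (simp add: inner_diff_left inner_diff_right inner_commute algebra_simps)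
  ultimately have "monotone_setop B'"
    unfolding monotone_setop_def B'_def by auto
  moreover have "\<forall>x. B x \<subseteq> B' x" by (auto simp: B'_def)
  ultimately have "B' = B" using max unfolding maximal_monotone_def by blast
  then show ?thesis by (metis B'_def fun_upd_same insertI1)
qed

lemma maximal_monotone_surj_resolvent:
  fixes B :: "'a::{real_inner,complete_space} \<Rightarrow> 'a set"
  assumes max: "maximal_monotone B" and lam: "lam > 0"
  shows "\<exists>y. \<exists>b\<in>B y. f = y + lam *\<^sub>R b"
proof -
  have mono: "monotone_setop B" using max by (simp add: maximal_monotone_def)
  define P where "P = {(a - f, lam *\<^sub>R b) | a b. b \<in> B a}"
  have "\<exists>x. \<forall>(a, b)\<in>P. (x + b) \<bullet> (x - a) \<le> 0"
  proof (rule monotone_minty)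
    fix a b a' b' assume "(a, b) \<in> P" "(a', b') \<in> P"
    then obtain a1 b1 a2 b2 where e: "a = a1 - f" "b = lam *\<^sub>R b1" "b1 \<in> B a1"
      "a' = a2 - f" "b' = lam *\<^sub>R b2" "b2 \<in> B a2" unfolding P_def by blast
    have "0 \<le> (b1 - b2) \<bullet> (a1 - a2)" using mono e unfolding monotone_setop_def by blast
    then show "0 \<le> (a - a') \<bullet> (b - b')"
      using e lam by (simp add: inner_commute scaleR_diff_right[symmetric])
  qed
  then obtain x where x: "\<And>a b. b \<in> B a \<Longrightarrow> (x + lam *\<^sub>R b) \<bullet> (x - (a - f)) \<le> 0"
    unfolding P_def by blast
  have "- (1/lam) *\<^sub>R x \<in> B (x + f)"
  proof (rule maximal_monotone_mem_if_monotonically_related[OF max])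
    fix a b assume "b \<in> B a"
    have "(- (1/lam) *\<^sub>R x - b) \<bullet> (x + f - a) = - (1/lam) * ((x + lam *\<^sub>R b) \<bullet> (x - (a - f)))"
      using lam by (simp add: inner_add_left inner_diff_left algebra_simps)
    then show "0 \<le> (- (1/lam) *\<^sub>R x - b) \<bullet> (x + f - a)"
      using x[OF \<open>b \<in> B a\<close>] lam by (simp add: divide_nonpos_pos)
  qed
  moreover have "f = (x + f) + lam *\<^sub>R (- (1/lam) *\<^sub>R x)" using lam by simp
  ultimately show ?thesis by blast
qed

lemma resolvent_mem:
  fixes B :: "'a::{real_inner,complete_space} \<Rightarrow> 'a set"
  assumes max: "maximal_monotone B" and lam: "lam > 0"
  shows "\<exists>b\<in>B (resolvent B lam f). f = resolvent B lam f + lam *\<^sub>R b"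
proof -
  have mono: "monotone_setop B" using max by (simp add: maximal_monotone_def)
  have unique: "y1 = y2" if "b1 \<in> B y1" "f = y1 + lam *\<^sub>R b1" "b2 \<in> B y2" "f = y2 + lam *\<^sub>R b2"
    for y1 y2 b1 b2
  proof -
    have "0 \<le> (b1 - b2) \<bullet> (y1 - y2)" using mono that unfolding monotone_setop_def by blast
    moreover have "y1 - y2 = - lam *\<^sub>R (b1 - b2)" using that by (simp add: algebra_simps)
    ultimately have "lam * ((b1 - b2) \<bullet> (b1 - b2)) \<le> 0" by (simp add: mult_le_0_iff)
    then have "(b1 - b2) \<bullet> (b1 - b2) \<le> 0" using lam by (simp add: mult_le_0_iff)
    then have "b1 = b2" using inner_ge_zero[of "b1 - b2"] by simp
    then show ?thesis using that by simp
  qed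
  have "\<exists>!y. \<exists>b\<in>B y. f = y + lam *\<^sub>R b"
    using maximal_monotone_surj_resolvent[OF max lam] unique by blast
  then show ?thesis unfolding resolvent_def by (rule theI')
qed

text \<open>The sum of a maximal monotone and a Lipschitz monotone operator is maximal monotone; this is
  the part of that fact needed to identify weak cluster points as zeros.\<close>
lemma mem_zeros_sum_if_monotonically_related:
  fixes A :: "'a::{real_inner,complete_space} \<Rightarrow> 'a"
  assumes max: "maximal_monotone B" and lip: "L-lipschitz_on UNIV A"
    and related: "\<And>a b. b \<in> B a \<Longrightarrow> (A a + b) \<bullet> (a - q) \<ge> 0"
  shows "q \<in> zeros_sum A B"
proof -
  have L: "L \<ge> 0" and lipA: "norm (A u - A v) \<le> L * norm (u - v)" for u v
    using lip by (simp_all add: lipschitz_on_def dist_norm)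
  define t where "t = 1 / (L + 1)"
  have t: "t > 0" "t * L < 1" using L by (auto simp: t_def field_simps)
  obtain a b where ab: "b \<in> B a" "q - t *\<^sub>R A q = a + t *\<^sub>R b"
    using maximal_monotone_surj_resolvent[OF max t(1), of "q - t *\<^sub>R A q"] by blast
  then have tb: "t *\<^sub>R b = q - a - t *\<^sub>R A q" by (simp add: algebra_simps)
  have "0 \<le> t * ((A a + b) \<bullet> (a - q))" using related[OF ab(1)] t by simp
  also have "\<dots> = t * (A a \<bullet> (a - q)) + (t *\<^sub>R b) \<bullet> (a - q)"
    by (simp add: inner_add_left algebra_simps)
  also have "\<dots> = t * ((A a - A q) \<bullet> (a - q)) - (norm (a - q))^2"
    unfolding tb by (simp add: inner_diff_left inner_diff_right power2_norm_eq_inner inner_commute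
        algebra_simps)
  also have "\<dots> \<le> t * (L * (norm (a - q))^2) - (norm (a - q))^2"
  proof -
    have "(A a - A q) \<bullet> (a - q) \<le> norm (A a - A q) * norm (a - q)" by (rule norm_cauchy_schwarz)
    also have "\<dots> \<le> L * norm (a - q) * norm (a - q)" using lipA[of a q]
      by (simp add: mult_right_mono)
    finally show ?thesis using t by (simp add: power2_eq_square mult.assoc)
  qed
  finally have "(1 - t * L) * (norm (a - q))^2 \<le> 0" by (simp add: algebra_simps)
  then have "a = q" using t(2) by (simp add: mult_le_0_iff)
  then have "t *\<^sub>R b = t *\<^sub>R (- A q)" using tb by simp
  then have "b = - A q" using t(1) scaleR_cancel_left by (metis less_irrefl)
  then show ?thesis using ab(1) \<open>a = q\<close> unfolding zeros_sum_def by (auto intro!: bexI[of _ "- A q"])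
qed

section \<open>Tail hull points and Opial's lemma\<close>

text \<open>Stand-in for weak subsequential limits: by Mazur's lemma, every weak limit of the subsequence
  of x indexed by S is a tail hull point.\<close>
definition tail_hull_point :: "(nat \<Rightarrow> 'a::real_normed_vector) \<Rightarrow> nat set \<Rightarrow> 'a \<Rightarrow> bool" where
  "tail_hull_point x S q \<longleftrightarrow> (\<forall>N. q \<in> closure (convex hull (x ` {n \<in> S. N \<le> n})))"

lemma tail_hull_point_exists:
  fixes x :: "nat \<Rightarrow> 'a::{real_inner,complete_space}"
  assumes bounded: "bounded (range x)" and S: "infinite S"
  shows "\<exists>q. tail_hull_point x S q"
proof -
  define K where "K N = closure (convex hull (x ` {n \<in> S. N \<le> n}))" for N
  have K_antimono: "K M \<subseteq> K N" if "N \<le> M" for N M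
    unfolding K_def using that by (intro closure_mono hull_mono image_mono) auto
  have K_nonempty: "K N \<noteq> {}" for N
  proof -
    obtain n where "n \<in> S" "N \<le> n" using S infinite_nat_iff_unbounded_le by blast
    then have "x n \<in> K N" unfolding K_def by (auto intro: closure_subset[THEN subsetD] hull_inc)
    then show ?thesis by blast
  qed
  have "(\<Inter>N\<in>UNIV. K N) \<noteq> {}"
  proof (rule closed_convex_family_Inter_nonempty[of UNIV K 0])
    show "closed (K N)" "convex (K N)" for N unfolding K_def by auto
    show "bounded (K 0)" unfolding K_def
      by (intro bounded_closure bounded_convex_hull bounded_subset[OF bounded]) auto
    fix J :: "nat set" assume "finite J"
    then have "K (Max (insert 0 J)) \<subseteq> K N" if "N \<in> insert 0 J" for N
      using that by (intro K_antimono) simp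
    then have "K (Max (insert 0 J)) \<subseteq> (\<Inter>N\<in>insert 0 J. K N)" by blast
    then show "(\<Inter>N\<in>insert 0 J. K N) \<noteq> {}" using K_nonempty by blast
  qed simp
  then show ?thesis unfolding tail_hull_point_def K_def by blast
qed

lemma tail_hull_point_inner_le:
  fixes x :: "nat \<Rightarrow> 'a::real_inner"
  assumes q: "tail_hull_point x S q"
    and bound: "\<And>e. e > 0 \<Longrightarrow> \<exists>N. \<forall>n\<in>S. N \<le> n \<longrightarrow> v \<bullet> x n \<le> c + e"
  shows "v \<bullet> q \<le> c"
proof (rule field_le_epsilon)
  fix e :: real assume "e > 0"
  then obtain N where N: "\<forall>n\<in>S. N \<le> n \<longrightarrow> v \<bullet> x n \<le> c + e" using bound by blast
  define H where "H = {z. v \<bullet> z \<le> c + e}"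
  have "x ` {n \<in> S. N \<le> n} \<subseteq> H" using N by (auto simp: H_def)
  then have "convex hull (x ` {n \<in> S. N \<le> n}) \<subseteq> H"
    by (rule hull_minimal) (simp add: H_def convex_halfspace_le)
  then have "closure (convex hull (x ` {n \<in> S. N \<le> n})) \<subseteq> H"
    by (rule closure_minimal) (simp add: H_def closed_halfspace_le)
  then show "v \<bullet> q \<le> c + e" using q by (auto simp: tail_hull_point_def H_def)
qed

lemma tail_hull_point_inner_eq_limit:
  fixes x :: "nat \<Rightarrow> 'a::real_inner"
  assumes lim: "(\<lambda>n. d \<bullet> x n) \<longlonglongrightarrow> c" and q: "tail_hull_point x S q"
  shows "d \<bullet> q = c"
proof -
  have close: "\<exists>N. \<forall>n\<ge>N. \<bar>d \<bullet> x n - c\<bar> \<le> e" if "e > 0" for e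
    using lim that unfolding LIMSEQ_def dist_real_def by (meson less_imp_le)
  have "d \<bullet> q \<le> c"
    using close by (intro tail_hull_point_inner_le[OF q]) (fastforce simp: abs_le_iff)
  moreover have "(- d) \<bullet> q \<le> - c"
    using close by (intro tail_hull_point_inner_le[OF q]) (fastforce simp: abs_le_iff)
  ultimately show ?thesis by simp
qed

lemma not_tendsto_inner_obtains_direction:
  fixes x :: "nat \<Rightarrow> 'a::real_inner"
  assumes "\<not> (\<lambda>n. x n \<bullet> v) \<longlonglongrightarrow> q \<bullet> v"
  obtains e w where "e > 0" "infinite {n. e \<le> (x n - q) \<bullet> w}"
proof -
  obtain e where e: "e > 0" and far: "\<forall>N. \<exists>n\<ge>N. e \<le> \<bar>x n \<bullet> v - q \<bullet> v\<bar>"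
    using assms unfolding LIMSEQ_def dist_real_def by (auto simp: not_less)
  have "{n. e \<le> \<bar>x n \<bullet> v - q \<bullet> v\<bar>} \<subseteq> {n. e \<le> (x n - q) \<bullet> v} \<union> {n. e \<le> (x n - q) \<bullet> (- v)}"
    by (auto simp: inner_diff_left abs_if split: if_splits)
  moreover have "infinite {n. e \<le> \<bar>x n \<bullet> v - q \<bullet> v\<bar>}"
    unfolding infinite_nat_iff_unbounded_le using far by simp
  ultimately have "infinite {n. e \<le> (x n - q) \<bullet> v} \<or> infinite {n. e \<le> (x n - q) \<bullet> (- v)}"
    by (meson finite_UnI finite_subset)
  then show thesis using that e by blast
qed

text \<open>Opial's lemma, with tail hull points in place of weak cluster points. Two tail hull points
  q0, q1 in the set see the same limit of x n \<bullet> (q1 - q0), which forces q1 = q0.\<close>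
lemma opial_weak_conv:
  fixes x :: "nat \<Rightarrow> 'a::{real_inner,complete_space}"
  assumes bounded: "bounded (range x)"
    and dist_conv: "\<And>p. p \<in> Z \<Longrightarrow> convergent (\<lambda>n. (norm (x n - p))^2)"
    and cluster: "\<And>S q. infinite S \<Longrightarrow> tail_hull_point x S q \<Longrightarrow> q \<in> Z"
  shows "\<exists>q\<in>Z. weak_conv x q"
proof -
  obtain q0 where q0_tail: "tail_hull_point x UNIV q0" using tail_hull_point_exists[OF bounded]
    by blast
  then have q0: "q0 \<in> Z" by (intro cluster) auto
  have inner_conv: "convergent (\<lambda>n. (q1 - q0) \<bullet> x n)" if q1: "q1 \<in> Z" for q1
  proof -
    have eq: "(q1 - q0) \<bullet> x n = ((norm (x n - q0))^2 - (norm (x n - q1))^2 - (norm q0)^2 + (norm q1)^2) / 2"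
      for n by (simp add: power2_norm_eq_inner inner_diff_left inner_diff_right inner_commute algebra_simps)
    obtain l0 l1 where "(\<lambda>n. (norm (x n - q0))^2) \<longlonglongrightarrow> l0" "(\<lambda>n. (norm (x n - q1))^2) \<longlonglongrightarrow> l1"
      using dist_conv[OF q0] dist_conv[OF q1] by (auto simp: convergent_def)
    then have "(\<lambda>n. (q1 - q0) \<bullet> x n) \<longlonglongrightarrow> (l0 - l1 - (norm q0)^2 + (norm q1)^2) / 2"
      unfolding eq by (auto intro!: tendsto_intros)
    then show ?thesis by (rule convergentI)
  qed
  have "weak_conv x q0"
    unfolding weak_conv_def
  proof (rule allI, rule ccontr)
    fix v assume "\<not> (\<lambda>n. x n \<bullet> v) \<longlonglongrightarrow> q0 \<bullet> v"
    then obtain e w where e: "e > 0" and S: "infinite {n. e \<le> (x n - q0) \<bullet> w}"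
      by (rule not_tendsto_inner_obtains_direction)
    then obtain q1 where q1_tail: "tail_hull_point x {n. e \<le> (x n - q0) \<bullet> w} q1"
      using tail_hull_point_exists[OF bounded] by blast
    then have q1: "q1 \<in> Z" using cluster S by blast
    have "(- w) \<bullet> q1 \<le> - (q0 \<bullet> w) - e"
      using q1_tail
        by (rule tail_hull_point_inner_le) (auto intro!: exI[of _ 0] simp: inner_diff_left inner_diff_right inner_commute[of q0 w] inner_commute[of w "x _"])
    then have gap: "e \<le> (q1 - q0) \<bullet> w" by (simp add: inner_diff_left inner_commute[of w q1])
    obtain l where "(\<lambda>n. (q1 - q0) \<bullet> x n) \<longlonglongrightarrow> l" using inner_conv[OF q1] convergent_def by blast
    then have "(q1 - q0) \<bullet> q0 = (q1 - q0) \<bullet> q1"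
      using tail_hull_point_inner_eq_limit q0_tail q1_tail by metis
    then have "(q1 - q0) \<bullet> (q1 - q0) = 0" by (simp add: inner_diff_right)
    then have "q1 = q0" by simp
    then show False using gap e by simp
  qed
  then show ?thesis using q0 by blast
qed

section \<open>Real sequences and parameter inequalities\<close>

lemma convergent_if_increments_summable:
  fixes v u :: "nat \<Rightarrow> real"
  assumes step: "\<And>n. v (Suc n) \<le> v n + u n" and u: "\<And>n. u n \<ge> 0" "summable u"
    and lower: "\<And>n. v n \<ge> lb"
  shows "convergent v"
proof -
  define V where "V n = v n - (\<Sum>k<n. u k)" for n
  have "decseq V" unfolding decseq_Suc_iff V_def using step by (simp add: diff_le_eq add.commute)
  moreover have "lb - suminf u \<le> V n" for n
    using lower[of n] sum_le_suminf[OF u(2), of "{..<n}"] u(1) by (simp add: V_def)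
  ultimately obtain l where "V \<longlonglongrightarrow> l" using decseq_convergent by blast
  then have "(\<lambda>n. V n + (\<Sum>k<n. u k)) \<longlonglongrightarrow> l + suminf u"
    using summable_LIMSEQ[OF u(2)] by (intro tendsto_add)
  then show ?thesis by (auto simp: V_def intro: convergentI)
qed

lemma summable_if_lessThan_sums_bounded:
  fixes a :: "nat \<Rightarrow> real"
  assumes "\<And>n. a n \<ge> 0" and "\<And>n. (\<Sum>k<n. a k) \<le> B"
  shows "summable a"
  using assms(2)[of "Suc _"]
    by (intro bounded_imp_summable[OF assms(1)]) (simp add: lessThan_Suc_atMost)

text \<open>Alvarez and Attouch: the positive parts of the increments satisfy
  u (n+1) \<le> a u n + e n, hence are summable.\<close>
lemma inertial_sequence_convergent:
  fixes \<phi> \<alpha> e :: "nat \<Rightarrow> real"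
  assumes step: "\<And>n. \<phi> (Suc (Suc n)) - \<phi> (Suc n) \<le> \<alpha> n * (\<phi> (Suc n) - \<phi> n) + e n"
    and \<alpha>: "\<And>n. 0 \<le> \<alpha> n" "\<And>n. \<alpha> n \<le> a" and a: "a < 1"
    and e: "\<And>n. e n \<ge> 0" "summable e" and nonneg: "\<And>n. \<phi> n \<ge> 0"
  shows "convergent \<phi>"
proof -
  define u where "u n = max 0 (\<phi> (Suc n) - \<phi> n)" for n
  have u0: "u n \<ge> 0" for n by (simp add: u_def)
  have a0: "a \<ge> 0" using \<alpha> order_trans by blast
  have u_step: "u (Suc n) \<le> a * u n + e n" for n
  proof -
    have "\<alpha> n * (\<phi> (Suc n) - \<phi> n) \<le> \<alpha> n * u n"
      using \<alpha>(1) by (intro mult_left_mono) (simp_all add: u_def)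
    also have "\<dots> \<le> a * u n" using \<alpha>(2) u0 by (intro mult_right_mono)
    finally show ?thesis using step[of n] e(1)[of n] a0 u0[of n] by (simp add: u_def)
  qed
  have "(\<Sum>k<n. u k) \<le> (u 0 + suminf e) / (1 - a)" for n
  proof -
    have "(\<Sum>k<Suc n. u k) = u 0 + (\<Sum>k<n. u (Suc k))" by (rule sum.lessThan_Suc_shift)
    also have "\<dots> \<le> u 0 + (\<Sum>k<n. a * u k + e k)" by (intro add_left_mono sum_mono u_step)
    also have "\<dots> = u 0 + a * (\<Sum>k<n. u k) + (\<Sum>k<n. e k)" by (simp add: sum.distrib sum_distrib_left)
    also have "\<dots> \<le> u 0 + a * (\<Sum>k<Suc n. u k) + suminf e"
      using sum_le_suminf[OF e(2), of "{..<n}"] e(1) mult_nonneg_nonneg[OF a0 u0[of n]]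
      by (simp add: algebra_simps)
    finally have "(1 - a) * (\<Sum>k<Suc n. u k) \<le> u 0 + suminf e" by (simp add: algebra_simps)
    then have "(\<Sum>k<Suc n. u k) \<le> (u 0 + suminf e) / (1 - a)"
      using a by (simp add: pos_le_divide_eq mult.commute)
    moreover have "(\<Sum>k<n. u k) \<le> (\<Sum>k<Suc n. u k)" using u0 by simp
    ultimately show ?thesis by linarith
  qed
  then have "summable u" by (rule summable_if_lessThan_sums_bounded[OF u0])
  then show ?thesis
    using u0 nonneg by (intro convergent_if_increments_summable[of \<phi> u]) (auto simp: u_def)
qed

text \<open>As a polynomial in bet, the left-hand side is eps^2 (bet - r1) (bet - r2) with
  r1, r2 = (3 + 2 eps \<mp> sqrt (8 eps + 17)) / (2 eps), and (C3)(ii) says bet < r1.\<close>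
lemma inertia_gap_pos:
  fixes eps bet :: real
  assumes eps: "eps > 1" and bet: "bet < (3 + 2 * eps - sqrt (8 * eps + 17)) / (2 * eps)"
  shows "eps * (1 + eps) * (1 - bet)^2 - 2 - eps * bet * (1 + bet) > 0" and "bet < 1"
proof -
  define s where "s = sqrt (8 * eps + 17)"
  have s2: "s^2 = 8 * eps + 17" unfolding s_def by (intro real_sqrt_pow2) (use eps in linarith)
  have s0: "s \<ge> 0" unfolding s_def by (rule real_sqrt_ge_zero) (use eps in linarith)
  define r1 where "r1 = (3 + 2 * eps - s) / (2 * eps)"
  define r2 where "r2 = (3 + 2 * eps + s) / (2 * eps)"
  have br1: "bet < r1" using bet by (simp add: r1_def s_def)
  have r12: "r1 \<le> r2" using s0 eps by (simp add: r1_def r2_def divide_right_mono)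
  have fac: "eps * (1 + eps) * (1 - bet)^2 - 2 - eps * bet * (1 + bet) = eps^2 * ((bet - r1) * (bet - r2))"
  proof -
    have "eps^2 * ((bet - r1) * (bet - r2)) = eps^2 * bet^2 - eps^2 * (r1 + r2) * bet + eps^2 * (r1 * r2)"
      by (simp add: algebra_simps power2_eq_square)
    also have "eps^2 * (r1 + r2) = 2 * eps^2 + 3 * eps" using eps
      by (simp add: r1_def r2_def power2_eq_square field_simps)
    also have "eps^2 * (r1 * r2) = eps^2 + eps - 2"
    proof -
      have "eps^2 * (r1 * r2) = ((3 + 2 * eps)^2 - s^2) / 4" using eps
        by (simp add: r1_def r2_def power2_eq_square field_simps)
      then show ?thesis using s2 by (simp add: power2_eq_square algebra_simps)
    qed
    finally show ?thesis by (simp add: power2_eq_square algebra_simps)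
  qed
  have "(bet - r1) * (bet - r2) > 0" using br1 r12 by (intro mult_neg_neg) auto
  then show "eps * (1 + eps) * (1 - bet)^2 - 2 - eps * bet * (1 + bet) > 0" using fac eps by simp
  have "s > 3"
  proof -
    have "s^2 > 3^2" using s2 eps by simp
    then show ?thesis using s0 by (smt (verit) power_mono)
  qed
  then have "r1 < 1" using eps by (simp add: r1_def field_simps)
  then show "bet < 1" using br1 by simp
qed

text \<open>With r = (1 - tt) / tt \<ge> eps the left-hand side is tt G r b, where G decreases in b and
  increases in r, and G eps bet is the gap of the previous lemma.\<close>
lemma relaxation_gap_lower_bound:
  fixes eps bet b th tt :: real
  assumes eps: "eps > 1" and b: "0 \<le> b" "b \<le> bet" and bet1: "bet < 1"
    and g: "eps * (1 + eps) * (1 - bet)^2 - 2 - eps * bet * (1 + bet) > 0"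
    and th: "0 < th" "th \<le> tt" "tt \<le> 1 / (1 + eps)"
  shows "(1 - tt) / tt * (1 - b)^2 - 2 * tt - (1 - tt) * b * (1 + b)
     \<ge> th * (eps * (1 + eps) * (1 - bet)^2 - 2 - eps * bet * (1 + bet))"
proof -
  define g where "g = eps * (1 + eps) * (1 - bet)^2 - 2 - eps * bet * (1 + bet)"
  define r where "r = (1 - tt) / tt"
  have tt0: "tt > 0" using th by simp
  have "tt * (1 + eps) \<le> 1" using th(3) eps by (simp add: field_simps)
  then have reps: "r \<ge> eps" using tt0 by (simp add: r_def field_simps)
  have ttr: "tt = 1 / (1 + r)" using tt0 by (simp add: r_def field_simps)
  define G where "G r b = r * (1 + r) * (1 - b)^2 - 2 - r * b * (1 + b)" for r b :: real
  have Q: "(1 - tt) / tt * (1 - b)^2 - 2 * tt - (1 - tt) * b * (1 + b) = tt * G r b"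
  proof -
    have e1: "tt * r = 1 - tt" using tt0 by (simp add: r_def)
    have e2: "(1 - tt) * (1 + r) = (1 - tt) / tt" using tt0 by (simp add: r_def field_simps)
    have "tt * G r b = (tt * r * (1 + r)) * (1 - b)^2 - 2 * tt - (tt * r) * b * (1 + b)"
      by (simp add: G_def algebra_simps)
    then show ?thesis unfolding e1 e2 by (simp add: e2)
  qed
  have r0: "r \<ge> 0" using reps eps by simp
  have G1: "G r b \<ge> G r bet"
  proof -
    have "G r b - G r bet = (bet - b) * (r * (1 + r) * (2 - b - bet) + r * (1 + b + bet))"
      by (simp add: G_def algebra_simps power2_eq_square)
    moreover have "r * (1 + r) * (2 - b - bet) + r * (1 + b + bet) \<ge> 0"
      using r0 b bet1 by (intro add_nonneg_nonneg mult_nonneg_nonneg) auto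
    ultimately show ?thesis using b by (smt (verit) mult_nonneg_nonneg)
  qed
  have G2: "G r bet \<ge> g"
  proof -
    have "G r bet - g = (r - eps) * ((1 + r + eps) * (1 - bet)^2 - bet * (1 + bet))"
      by (simp add: G_def g_def algebra_simps power2_eq_square)
    moreover have "(1 + r + eps) * (1 - bet)^2 - bet * (1 + bet) \<ge> 0"
    proof -
      have "eps * ((1 + eps) * (1 - bet)^2) > eps * (bet * (1 + bet))"
        using g bet1 b eps unfolding g_def by (simp add: algebra_simps)
      then have "(1 + eps) * (1 - bet)^2 > bet * (1 + bet)" using eps by simp
      moreover have "(1 + eps) * (1 - bet)^2 \<le> (1 + r + eps) * (1 - bet)^2"
        using r0 by (intro mult_right_mono) auto
      ultimately show ?thesis by simp
    qed
    ultimately show ?thesis using reps by (smt (verit) mult_nonneg_nonneg)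
  qed
  have gp: "g > 0" using g by (simp add: g_def)
  have "th * g \<le> tt * g" using th gp by (simp add: mult_right_mono)
  also have "\<dots> \<le> tt * G r b" using G1 G2 tt0 by (simp add: mult_left_mono)
  finally show ?thesis using Q by (simp add: g_def)
qed

section \<open>Norm identities for one step\<close>

lemma norm_sq_tseng_step:
  fixes y p w ay aw :: "'a::real_inner"
  shows "(norm ((y - l *\<^sub>R (ay - aw)) - p))^2 = (norm (w - p))^2 - (norm (w - y))^2
    + l^2 * (norm (ay - aw))^2 - 2 * ((w - y - l *\<^sub>R aw + l *\<^sub>R ay) \<bullet> (y - p))"
  unfolding power2_norm_eq_inner
    by (simp add: power2_eq_square inner_add_left inner_add_right inner_diff_left
      inner_diff_right inner_commute algebra_simps)

lemma norm_sq_convex_comb: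
  fixes Z T :: "'a::real_inner"
  shows "(norm ((1 - t) *\<^sub>R Z + t *\<^sub>R T))^2 = (1 - t) * (norm Z)^2 + t * (norm T)^2 - t * (1 - t) * (norm (Z - T))^2"
  unfolding power2_norm_eq_inner
    by (simp add: power2_eq_square inner_add_left inner_add_right inner_diff_left
      inner_diff_right inner_commute algebra_simps)

lemma norm_sq_extrapolation:
  fixes X Y :: "'a::real_inner"
  shows "(norm ((1 + b) *\<^sub>R X - b *\<^sub>R Y))^2 = (1 + b) * (norm X)^2 - b * (norm Y)^2 + b * (1 + b) * (norm (X - Y))^2"
  unfolding power2_norm_eq_inner
    by (simp add: power2_eq_square inner_add_left inner_add_right inner_diff_left
      inner_diff_right inner_commute algebra_simps)

lemma norm_sq_diff_scaled_ge:
  fixes D D' :: "'a::real_inner"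
  assumes "0 \<le> b"
  shows "(norm (D' - b *\<^sub>R D))^2 \<ge> (1 - b) * (norm D')^2 - b * (1 - b) * (norm D)^2"
proof -
  have e: "(norm (D' - b *\<^sub>R D))^2 = (norm D')^2 - 2 * b * (D' \<bullet> D) + b^2 * (norm D)^2"
    unfolding power2_norm_eq_inner
      by (simp add: power2_eq_square inner_diff_left inner_diff_right inner_commute algebra_simps)
  have "2 * (D' \<bullet> D) \<le> (norm D')^2 + (norm D)^2"
  proof -
    have "0 \<le> (norm (D' - D))^2" by simp
    also have "(norm (D' - D))^2 = (norm D')^2 - 2 * (D' \<bullet> D) + (norm D)^2"
      by (simp add: power2_norm_eq_inner inner_diff_left inner_diff_right inner_commute)
    finally show ?thesis by simp
  qed
  then have "b * (2 * (D' \<bullet> D)) \<le> b * ((norm D')^2 + (norm D)^2)" using assms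
    by (rule mult_left_mono)
  then show ?thesis unfolding e by (simp add: algebra_simps power2_eq_square)
qed

lemma relaxed_inertial_step_ineq:
  fixes X Y T :: "'a::real_inner"
  assumes t: "0 < t" "t < 1" and b: "0 \<le> b"
    and T: "(norm T)^2 \<le> (norm ((1 + a) *\<^sub>R X - a *\<^sub>R Y))^2 - K"
  shows "(norm ((1 - t) *\<^sub>R ((1 + b) *\<^sub>R X - b *\<^sub>R Y) + t *\<^sub>R T))^2
    \<le> (1 - t) * ((1 + b) * (norm X)^2 - b * (norm Y)^2 + b * (1 + b) * (norm (X - Y))^2)
     + t * ((1 + a) * (norm X)^2 - a * (norm Y)^2 + a * (1 + a) * (norm (X - Y))^2 - K)
     - ((1 - t) / t) * ((1 - b) * (norm ((1 - t) *\<^sub>R ((1 + b) *\<^sub>R X - b *\<^sub>R Y) + t *\<^sub>R T - X))^2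
          - b * (1 - b) * (norm (X - Y))^2)"
proof -
  define Z where "Z = (1 + b) *\<^sub>R X - b *\<^sub>R Y"
  define Xn where "Xn = (1 - t) *\<^sub>R Z + t *\<^sub>R T"
  have i1: "(norm Xn)^2 = (1 - t) * (norm Z)^2 + t * (norm T)^2 - t * (1 - t) * (norm (Z - T))^2"
    unfolding Xn_def by (rule norm_sq_convex_comb)
  have i2: "(norm Z)^2 = (1 + b) * (norm X)^2 - b * (norm Y)^2 + b * (1 + b) * (norm (X - Y))^2"
    unfolding Z_def by (rule norm_sq_extrapolation)
  have i3: "(norm ((1 + a) *\<^sub>R X - a *\<^sub>R Y))^2 = (1 + a) * (norm X)^2 - a * (norm Y)^2 + a * (1 + a) * (norm (X - Y))^2"
    by (rule norm_sq_extrapolation)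
  have "Xn - Z = t *\<^sub>R (T - Z)" by (simp add: Xn_def algebra_simps)
  then have "(norm (Xn - Z))^2 = t^2 * (norm (Z - T))^2"
    by (simp add: power_mult_distrib norm_minus_commute)
  then have i4: "t * (1 - t) * (norm (Z - T))^2 = ((1 - t) / t) * (norm (Xn - Z))^2"
    using t by (simp add: power2_eq_square field_simps)
  have "Xn - Z = (Xn - X) - b *\<^sub>R (X - Y)" by (simp add: Z_def algebra_simps)
  then have i5: "(norm (Xn - Z))^2 \<ge> (1 - b) * (norm (Xn - X))^2 - b * (1 - b) * (norm (X - Y))^2"
    using norm_sq_diff_scaled_ge[OF b, of "Xn - X" "X - Y"] by metis
  have c0: "(1 - t) / t \<ge> 0" using t by simp
  have i6: "((1 - t) / t) * ((1 - b) * (norm (Xn - X))^2 - b * (1 - b) * (norm (X - Y))^2) \<le> ((1 - t) / t) * (norm (Xn - Z))^2"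
    using i5 c0 by (rule mult_left_mono)
  have i7: "t * (norm T)^2 \<le> t * ((norm ((1 + a) *\<^sub>R X - a *\<^sub>R Y))^2 - K)"
    using T t by (intro mult_left_mono) auto
  have j2: "(1 - t) * (norm Z)^2 = (1 - t) * ((1 + b) * (norm X)^2 - b * (norm Y)^2 + b * (1 + b) * (norm (X - Y))^2)"
    using i2 by simp
  have j3: "t * ((norm ((1 + a) *\<^sub>R X - a *\<^sub>R Y))^2 - K) = t * ((1 + a) * (norm X)^2 - a * (norm Y)^2 + a * (1 + a) * (norm (X - Y))^2 - K)"
    using i3 by simp
  show ?thesis
    unfolding Z_def[symmetric] Xn_def[symmetric]
    using i1 i4 i6 i7 j2 j3 by linarith
qed

section \<open>Convergence of the algorithm\<close>

locale relaxed_inertial_fbf =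
  fixes A :: "'a::{real_inner, complete_space} \<Rightarrow> 'a"
    and B :: "'a \<Rightarrow> 'a set"
    and L mu eps bet th :: real
    and alpha beta theta mun p lam :: "nat \<Rightarrow> real"
    and x w z y :: "nat \<Rightarrow> 'a"
  assumes C1: "zeros_sum A B \<noteq> {}"
    and C2_lip: "L-lipschitz_on UNIV A"
    and C2_mono: "monotone_op A"
    and C2_max: "maximal_monotone B"
    and mu: "0 < mu" "mu < 1"
    and lam1: "lam 1 > 0"
    and mun_nonneg: "\<And>n. n \<ge> 1 \<Longrightarrow> mun n \<ge> 0"
    and p_nonneg: "\<And>n. n \<ge> 1 \<Longrightarrow> p n \<ge> 0"
    and eps: "eps > 1"
    and C3_i: "\<And>n. n \<ge> 1 \<Longrightarrow> 0 \<le> alpha n \<and> alpha n \<le> 1"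
    and C3_ii: "\<And>n. n \<ge> 1 \<Longrightarrow> 0 \<le> beta n \<and> beta n \<le> beta (Suc n) \<and> beta (Suc n) \<le> bet"
    and C3_ii_bet: "bet < (3 + 2 * eps - sqrt (8 * eps + 17)) / (2 * eps)"
    and C3_iii: "\<And>n. n \<ge> 1 \<Longrightarrow> 0 < th \<and> th < theta n \<and> theta n \<le> theta (Suc n)
                      \<and> theta (Suc n) \<le> 1 / (1 + eps)"
    and C3_iv: "\<And>n. n \<ge> 1 \<Longrightarrow>
        (1 - theta n) * beta n + theta n * alpha n
          \<le> (1 - theta (Suc n)) * beta (Suc n) + theta (Suc n) * alpha (Suc n)"
    and C3_v: "summable (\<lambda>n. p (Suc n))" "mun \<longlonglongrightarrow> 0"
    and w_def: "\<And>n. n \<ge> 1 \<Longrightarrow> w n = x n + alpha n *\<^sub>R (x n - x (n - 1))"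
    and z_def: "\<And>n. n \<ge> 1 \<Longrightarrow> z n = x n + beta n *\<^sub>R (x n - x (n - 1))"
    and y_def: "\<And>n. n \<ge> 1 \<Longrightarrow> y n = resolvent B (lam n) (w n - lam n *\<^sub>R A (w n))"
    and lam_def: "\<And>n. n \<ge> 1 \<Longrightarrow> lam (Suc n) =
        (if A (w n) \<noteq> A (y n)
         then min ((mun n + mu) * norm (w n - y n) / norm (A (w n) - A (y n))) (lam n + p n)
         else lam n + p n)"
    and nostop: "\<And>n. n \<ge> 1 \<Longrightarrow> w n \<noteq> y n"
    and x_def: "\<And>n. n \<ge> 1 \<Longrightarrow> x (Suc n) =
        (1 - theta n) *\<^sub>R z n + theta n *\<^sub>R (y n - lam n *\<^sub>R (A (y n) - A (w n)))"
begin

lemma L_nonneg: "L \<ge> 0" using C2_lip by (simp add: lipschitz_on_def)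

lemma A_lipschitz: "norm (A u - A v) \<le> L * norm (u - v)"
  using C2_lip by (simp add: lipschitz_on_def dist_norm)

definition lam_min :: real where "lam_min = min (lam 1) (mu / (L + 1))"

lemma lam_min_pos: "lam_min > 0" using lam1 mu L_nonneg by (simp add: lam_min_def)

lemma lam_ge_lam_min: "n \<ge> 1 \<Longrightarrow> lam n \<ge> lam_min"
proof (induct n rule: nat_induct_at_least)
  case base then show ?case by (simp add: lam_min_def)
next
  case (Suc n)
  have p0: "p n \<ge> 0" using p_nonneg Suc by simp
  show ?case
  proof (cases "A (w n) \<noteq> A (y n)")
    case True
    define nwy where "nwy = norm (w n - y n)"
    define nA where "nA = norm (A (w n) - A (y n))"
    have nA0: "nA > 0" using True by (simp add: nA_def)
    have nwy0: "nwy > 0" using nostop Suc by (simp add: nwy_def)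
    have "nA \<le> L * nwy" using A_lipschitz[of "w n" "y n"] unfolding nA_def nwy_def .
    then have nAle: "nA \<le> (L + 1) * nwy" using nwy0 by (simp add: algebra_simps)
    have "mu * nwy / ((L + 1) * nwy) \<le> (mun n + mu) * nwy / nA"
      using mun_nonneg[of n] Suc nwy0 nA0 nAle mu by (intro frac_le) (auto intro: mult_right_mono)
    moreover have "mu * nwy / ((L + 1) * nwy) = mu / (L + 1)" using nwy0 by simp
    ultimately have "lam_min \<le> (mun n + mu) * nwy / nA" unfolding lam_min_def by linarith
    moreover have "lam_min \<le> lam n + p n" using Suc p0 by linarith
    ultimately show ?thesis using lam_def[of n] Suc True by (simp add: nwy_def nA_def)
  next
    case False
    then show ?thesis using lam_def[of n] Suc p0 by simp
  qed
qed

lemma lam_pos: "n \<ge> 1 \<Longrightarrow> lam n > 0" using lam_ge_lam_min lam_min_pos by (meson less_le_trans)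

lemma lam_Suc_le: "n \<ge> 1 \<Longrightarrow> lam (Suc n) \<le> lam n + p n"
  using lam_def[of n] by simp

lemma lam_Suc_mult_le:
  "n \<ge> 1 \<Longrightarrow> lam (Suc n) * norm (A (w n) - A (y n)) \<le> (mun n + mu) * norm (w n - y n)"
proof -
  assume n: "n \<ge> 1"
  show ?thesis
  proof (cases "A (w n) \<noteq> A (y n)")
    case True
    define nA where "nA = norm (A (w n) - A (y n))"
    have nA0: "nA > 0" using True by (simp add: nA_def)
    have "lam (Suc n) \<le> (mun n + mu) * norm (w n - y n) / nA" using lam_def[of n] n True
      by (simp add: nA_def)
    then have "lam (Suc n) * nA \<le> (mun n + mu) * norm (w n - y n)" using nA0
      by (simp add: pos_le_divide_eq)
    then show ?thesis by (simp add: nA_def)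
  next
    case False
    then show ?thesis using mun_nonneg[OF n] mu by simp
  qed
qed

lemma lam_convergent: "\<exists>ls. ls \<ge> lam_min \<and> lam \<longlonglongrightarrow> ls"
proof -
  have "convergent (\<lambda>k. lam (Suc k))"
  proof (rule convergent_if_increments_summable[of _ "\<lambda>k. p (Suc k)" lam_min])
    show "lam (Suc (Suc k)) \<le> lam (Suc k) + p (Suc k)" for k using lam_Suc_le[of "Suc k"] by simp
    show "p (Suc k) \<ge> 0" for k using p_nonneg[of "Suc k"] by simp
    show "summable (\<lambda>k. p (Suc k))" by (rule C3_v(1))
    show "lam (Suc k) \<ge> lam_min" for k using lam_ge_lam_min[of "Suc k"] by simp
  qed
  then obtain ls where ls: "(\<lambda>k. lam (Suc k)) \<longlonglongrightarrow> ls" by (auto simp: convergent_def)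
  have "lam_min \<le> ls" using ls by (rule LIMSEQ_le_const) (use lam_ge_lam_min in auto)
  moreover have "lam \<longlonglongrightarrow> ls" using ls by (rule LIMSEQ_imp_Suc)
  ultimately show ?thesis by blast
qed

definition kappa :: real where "kappa = (1 - mu^2) / 2"

lemma kappa_pos: "kappa > 0"
proof -
  have "mu^2 < 1" using mu by (simp add: power_less_one_iff abs_if)
  then show ?thesis by (simp add: kappa_def)
qed

text \<open>By construction lam (n+1) |A w_n - A y_n| \<le> (mun n + mu) |w_n - y_n|, and
  lam n / lam (n+1) \<rightarrow> 1 because the step sizes converge to a positive limit.\<close>
lemma eventually_lam_contractive:
  "\<exists>n0\<ge>1. \<forall>n\<ge>n0. (lam n)^2 * (norm (A (y n) - A (w n)))^2 \<le> (1 - kappa) * (norm (w n - y n))^2"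
proof -
  obtain ls where ls: "ls \<ge> lam_min" "lam \<longlonglongrightarrow> ls" using lam_convergent by blast
  have ls0: "ls > 0" using ls(1) lam_min_pos by simp
  define rho where "rho n = lam n * (mun n + mu) / lam (Suc n)" for n
  have "rho \<longlonglongrightarrow> ls * (0 + mu) / ls" unfolding rho_def
    by (intro tendsto_intros ls(2) C3_v(2) LIMSEQ_Suc) (use ls0 in simp)
  then have "(\<lambda>n. (rho n)^2) \<longlonglongrightarrow> mu^2" using ls0 by (simp add: tendsto_power)
  moreover have "mu^2 < 1 - kappa" using kappa_pos unfolding kappa_def by argo
  ultimately have "\<forall>\<^sub>F n in sequentially. (rho n)^2 < 1 - kappa" by (rule order_tendstoD(2))
  then obtain N where N: "\<And>n. n \<ge> N \<Longrightarrow> (rho n)^2 < 1 - kappa" by (auto simp: eventually_sequentially)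
  show ?thesis
  proof (intro exI[of _ "max N 1"] conjI allI impI)
    fix n assume n: "max N 1 \<le> n"
    then have n1: "n \<ge> 1" and nN: "n \<ge> N" by auto
    have lp: "lam n > 0" "lam (Suc n) > 0" using lam_pos n1 by auto
    have "lam (Suc n) * norm (A (w n) - A (y n)) \<le> (mun n + mu) * norm (w n - y n)"
      by (rule lam_Suc_mult_le[OF n1])
    then have "norm (A (w n) - A (y n)) \<le> (mun n + mu) * norm (w n - y n) / lam (Suc n)"
      using lp by (simp add: field_simps)
    then have "lam n * norm (A (w n) - A (y n)) \<le> lam n * ((mun n + mu) * norm (w n - y n) / lam (Suc n))"
      using lp(1) by (rule mult_left_mono[OF _ less_imp_le])
    also have "\<dots> = rho n * norm (w n - y n)" by (simp add: rho_def)
    finally have le: "lam n * norm (A (y n) - A (w n)) \<le> rho n * norm (w n - y n)"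
      by (simp add: norm_minus_commute)
    have "(lam n * norm (A (y n) - A (w n)))^2 \<le> (rho n * norm (w n - y n))^2"
      using le lp by (intro power_mono) auto
    also have "\<dots> = (rho n)^2 * (norm (w n - y n))^2" by (simp add: power_mult_distrib)
    also have "\<dots> \<le> (1 - kappa) * (norm (w n - y n))^2" using N[OF nN]
      by (intro mult_right_mono) auto
    finally show "(lam n)^2 * (norm (A (y n) - A (w n)))^2 \<le> (1 - kappa) * (norm (w n - y n))^2"
      by (simp add: power_mult_distrib)
  qed simp
qed

lemma y_resolvent: "n \<ge> 1 \<Longrightarrow> \<exists>b\<in>B (y n). w n - lam n *\<^sub>R A (w n) = y n + lam n *\<^sub>R b"
  using resolvent_mem[OF C2_max lam_pos] y_def by metis

definition tseng_pt :: "nat \<Rightarrow> 'a" where "tseng_pt n = y n - lam n *\<^sub>R (A (y n) - A (w n))"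

lemma norm_tseng_step_le:
  assumes pt: "pt \<in> zeros_sum A B" and n: "n \<ge> 1"
  shows "(norm (tseng_pt n - pt))^2
    \<le> (norm (w n - pt))^2 - (norm (w n - y n))^2 + (lam n)^2 * (norm (A (y n) - A (w n)))^2"
proof -
  obtain b where b: "b \<in> B (y n)" "w n - lam n *\<^sub>R A (w n) = y n + lam n *\<^sub>R b"
    using y_resolvent[OF n] by blast
  obtain bp where bp: "bp \<in> B pt" "A pt + bp = 0" using pt unfolding zeros_sum_def by blast
  have "(b - bp) \<bullet> (y n - pt) \<ge> 0"
    using C2_max b(1) bp(1) unfolding maximal_monotone_def monotone_setop_def by blast
  moreover have "(A (y n) - A pt) \<bullet> (y n - pt) \<ge> 0" using C2_mono unfolding monotone_op_def by blast
  moreover have "A pt = - bp" using bp(2) by (simp add: eq_neg_iff_add_eq_0)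
  ultimately have "(b + A (y n)) \<bullet> (y n - pt) \<ge> 0" by (simp add: inner_diff_left inner_add_left)
  moreover have "w n - y n - lam n *\<^sub>R A (w n) + lam n *\<^sub>R A (y n) = lam n *\<^sub>R (b + A (y n))"
    using b(2) by (simp add: algebra_simps)
  ultimately have "(w n - y n - lam n *\<^sub>R A (w n) + lam n *\<^sub>R A (y n)) \<bullet> (y n - pt) \<ge> 0"
    using lam_pos[OF n] by simp
  then show ?thesis
    using norm_sq_tseng_step[of "y n" "lam n" "A (y n)" "A (w n)" pt "w n"] unfolding tseng_pt_def
    by linarith
qed

definition phi :: "'a \<Rightarrow> nat \<Rightarrow> real" where "phi pt n = (norm (x n - pt))^2"
definition delta :: "nat \<Rightarrow> real" where "delta n = (norm (x n - x (n - 1)))^2"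
definition resid :: "nat \<Rightarrow> real" where "resid n = (norm (w n - y n))^2"
definition acoef :: "nat \<Rightarrow> real" where "acoef n = (1 - theta n) * beta n + theta n * alpha n"
definition rcoef :: "nat \<Rightarrow> real" where "rcoef n = (1 - theta n) / theta n"
definition Ecoef :: "nat \<Rightarrow> real" where
  "Ecoef n = (1 - theta n) * beta n * (1 + beta n) + 2 * theta n + rcoef n * beta n * (1 - beta n)"
definition Fcoef :: "nat \<Rightarrow> real" where "Fcoef n = rcoef n * (1 - beta n)"
definition gap :: real where "gap = eps * (1 + eps) * (1 - bet)^2 - 2 - eps * bet * (1 + bet)"
definition c0 :: real where "c0 = th * gap"

lemma gap_pos: "gap > 0" and bet1: "bet < 1"
  using inertia_gap_pos[OF eps C3_ii_bet] by (simp_all add: gap_def)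

lemma th_pos: "th > 0" using C3_iii[of 1] by simp

lemma c0_pos: "c0 > 0" using gap_pos th_pos by (simp add: c0_def)

lemma theta_bounds:
  assumes "n \<ge> 1" shows "th < theta n" "theta n \<le> 1 / (1 + eps)" "0 < theta n" "theta n < 1/2"
proof -
  show "th < theta n" using C3_iii[OF assms] by simp
  show t2: "theta n \<le> 1 / (1 + eps)" using C3_iii[OF assms] by simp
  show "0 < theta n" using C3_iii[OF assms] by simp
  have "1 / (1 + eps) < 1/2" using eps by (simp add: field_simps)
  then show "theta n < 1/2" using t2 by simp
qed

lemma beta_bounds: assumes "n \<ge> 1" shows "0 \<le> beta n" "beta n \<le> bet" "beta n < 1"
  using C3_ii[OF assms] bet1 by auto

lemma alpha_bounds: assumes "n \<ge> 1" shows "0 \<le> alpha n" "alpha n \<le> 1"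
  using C3_i[OF assms] by auto

definition n0 :: nat where
  "n0 = (SOME N. N \<ge> 1 \<and> (\<forall>n\<ge>N. (lam n)^2 * (norm (A (y n) - A (w n)))^2 \<le> (1 - kappa) * (norm (w n - y n))^2))"

lemma n0_ge_1: "n0 \<ge> 1"
  and lam_contractive:
    "n \<ge> n0 \<Longrightarrow> (lam n)^2 * (norm (A (y n) - A (w n)))^2 \<le> (1 - kappa) * (norm (w n - y n))^2"
proof -
  have "n0 \<ge> 1 \<and> (\<forall>n\<ge>n0. (lam n)^2 * (norm (A (y n) - A (w n)))^2 \<le> (1 - kappa) * (norm (w n - y n))^2)"
    unfolding n0_def using eventually_lam_contractive by (rule someI_ex)
  then show "n0 \<ge> 1" "n \<ge> n0 \<Longrightarrow> (lam n)^2 * (norm (A (y n) - A (w n)))^2 \<le> (1 - kappa) * (norm (w n - y n))^2"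
    by auto
qed

lemma norm_tseng_pt_le:
  assumes pt: "pt \<in> zeros_sum A B" and n: "n \<ge> n0"
  shows "(norm (tseng_pt n - pt))^2 \<le> (norm (w n - pt))^2 - kappa * resid n"
proof -
  have n1: "n \<ge> 1" using n n0_ge_1 by simp
  note t1 = norm_tseng_step_le[OF pt n1]
  note k = lam_contractive[OF n]
  have e: "(1 - kappa) * (norm (w n - y n))^2 = (norm (w n - y n))^2 - kappa * (norm (w n - y n))^2"
    by (simp add: algebra_simps)
  show ?thesis using t1 k e unfolding tseng_pt_def resid_def by linarith
qed

lemma phi_Suc_le:
  assumes pt: "pt \<in> zeros_sum A B" and n: "n \<ge> n0"
  shows "phi pt (Suc n)
    \<le> (1 - theta n) * ((1 + beta n) * phi pt n - beta n * phi pt (n - 1)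
          + beta n * (1 + beta n) * delta n)
      + theta n * ((1 + alpha n) * phi pt n - alpha n * phi pt (n - 1)
          + alpha n * (1 + alpha n) * delta n - kappa * resid n)
      - rcoef n * ((1 - beta n) * delta (Suc n) - beta n * (1 - beta n) * delta n)"
proof -
  have n1: "n \<ge> 1" using n n0_ge_1 by simp
  define X where "X = x n - pt"
  define Y where "Y = x (n - 1) - pt"
  define T where "T = tseng_pt n - pt"
  have wX: "(1 + alpha n) *\<^sub>R X - alpha n *\<^sub>R Y = w n - pt"
    using w_def[OF n1] by (simp add: X_def Y_def algebra_simps)
  have xX: "(1 - theta n) *\<^sub>R ((1 + beta n) *\<^sub>R X - beta n *\<^sub>R Y) + theta n *\<^sub>R T = x (Suc n) - pt"
    using x_def[OF n1] z_def[OF n1] by (simp add: X_def Y_def T_def tseng_pt_def algebra_simps)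
  have Tb: "(norm T)^2 \<le> (norm ((1 + alpha n) *\<^sub>R X - alpha n *\<^sub>R Y))^2 - kappa * resid n"
    unfolding wX T_def by (rule norm_tseng_pt_le[OF pt n])
  have th: "0 < theta n" "theta n < 1" using theta_bounds[OF n1] by auto
  note si = relaxed_inertial_step_ineq[OF th beta_bounds(1)[OF n1] Tb]
  have e1: "x (Suc n) - pt - X = x (Suc n) - x n" by (simp add: X_def)
  have e2: "X - Y = x n - x (n - 1)" by (simp add: X_def Y_def)
  show ?thesis using si unfolding xX e1 e2 unfolding X_def Y_def
    by (simp add: phi_def delta_def rcoef_def)
qed

lemma phi_inertial_ineq:
  assumes pt: "pt \<in> zeros_sum A B" and n: "n \<ge> n0"
  shows "phi pt (Suc n) - phi pt n - acoef n * (phi pt n - phi pt (n - 1))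
     \<le> Ecoef n * delta n - Fcoef n * delta (Suc n) - theta n * kappa * resid n"
proof -
  have n1: "n \<ge> 1" using n n0_ge_1 by simp
  note os = phi_Suc_le[OF pt n]
  have ddn: "delta n \<ge> 0" by (simp add: delta_def)
  have aterm: "theta n * (alpha n * (1 + alpha n) * delta n) \<le> theta n * (2 * delta n)"
  proof -
    have "alpha n * (1 + alpha n) \<le> 1 * 2" using alpha_bounds[OF n1] by (intro mult_mono) auto
    then have "alpha n * (1 + alpha n) \<le> 2" by simp
    then have "alpha n * (1 + alpha n) * delta n \<le> 2 * delta n" using ddn by (rule mult_right_mono)
    then show ?thesis using theta_bounds(3)[OF n1] by (intro mult_left_mono) auto
  qed
  show ?thesis
    using os aterm unfolding acoef_def Fcoef_def Ecoef_def by (simp add: algebra_simps)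
qed


definition n1 :: nat where "n1 = n0 + 1"
definition lyap :: "'a \<Rightarrow> nat \<Rightarrow> real" where
  "lyap pt n = phi pt n - acoef n * phi pt (n - 1) + Fcoef (n - 1) * delta n"
definition amax :: real where "amax = (1 + bet) / 2"

lemma amax_less_1: "amax < 1" using bet1 by (simp add: amax_def)

lemma amax_nonneg: "amax \<ge> 0" using beta_bounds[of 1] by (simp add: amax_def)

lemma acoef_bounds: assumes "n \<ge> 1" shows "0 \<le> acoef n" "acoef n \<le> amax"
proof -
  note t = theta_bounds[OF assms] and b = beta_bounds[OF assms] and a = alpha_bounds[OF assms]
  show "0 \<le> acoef n" unfolding acoef_def using t b a
    by (intro add_nonneg_nonneg mult_nonneg_nonneg) auto
  have "(1 - theta n) * beta n \<le> (1 - theta n) * bet" using t b by (intro mult_left_mono) auto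
  moreover have "theta n * alpha n \<le> theta n * 1" using t a by (intro mult_left_mono) auto
  moreover have "(1 - theta n) * bet + theta n \<le> amax"
  proof -
    have "theta n * (1 - bet) \<le> (1/2) * (1 - bet)" using t bet1 by (intro mult_right_mono) auto
    then show ?thesis by (simp add: amax_def algebra_simps)
  qed
  ultimately show "acoef n \<le> amax" unfolding acoef_def by linarith
qed

lemma acoef_mono: "n \<ge> 1 \<Longrightarrow> acoef n \<le> acoef (Suc n)" using C3_iv by (simp add: acoef_def)

lemma rcoef_nonneg: "n \<ge> 1 \<Longrightarrow> rcoef n \<ge> 0" using theta_bounds[of n] by (simp add: rcoef_def)

lemma Fcoef_nonneg: "n \<ge> 1 \<Longrightarrow> Fcoef n \<ge> 0" using rcoef_nonneg[of n] beta_bounds[of n]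
  by (simp add: Fcoef_def)

lemma delta_nonneg: "delta n \<ge> 0" by (simp add: delta_def)
lemma resid_nonneg: "resid n \<ge> 0" by (simp add: resid_def)
lemma phi_nonneg: "phi pt n \<ge> 0" by (simp add: phi_def)

lemma Fcoef_minus_Ecoef_ge:
  assumes n: "n \<ge> 2" shows "Fcoef (n - 1) - Ecoef n \<ge> c0"
proof -
  define m where "m = n - 1"
  have m1: "m \<ge> 1" and nm: "n = Suc m" using n by (auto simp: m_def)
  have n1: "n \<ge> 1" using n by simp
  have tm: "theta m \<le> theta n" using C3_iii[OF m1] nm by simp
  have bm: "beta m \<le> beta n" using C3_ii[OF m1] nm by simp
  note tbn = theta_bounds[OF n1] and tbm = theta_bounds[OF m1] and bbn = beta_bounds[OF n1]
  have rrm: "rcoef m \<ge> rcoef n"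
  proof -
    have "1 / theta n \<le> 1 / theta m" using tm tbm by (intro divide_left_mono) auto
    then show ?thesis using tbn tbm by (simp add: rcoef_def diff_divide_distrib)
  qed
  have "Fcoef m \<ge> rcoef n * (1 - beta n)"
    unfolding Fcoef_def using rrm bm bbn rcoef_nonneg[OF n1] by (intro mult_mono) auto
  moreover have "rcoef n * (1 - beta n)^2 - 2 * theta n - (1 - theta n) * beta n * (1 + beta n) \<ge> c0"
    using relaxation_gap_lower_bound[OF eps bbn(1,2) bet1 gap_pos[unfolded gap_def] th_pos
        less_imp_le[OF tbn(1)] tbn(2)]
    by (simp add: rcoef_def c0_def gap_def)
  moreover have "rcoef n * (1 - beta n) - Ecoef n
      = rcoef n * (1 - beta n)^2 - 2 * theta n - (1 - theta n) * beta n * (1 + beta n)"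
    by (simp add: Ecoef_def power2_eq_square algebra_simps)
  ultimately show ?thesis unfolding m_def[symmetric] by linarith
qed

lemma lyap_Suc_le:
  assumes pt: "pt \<in> zeros_sum A B" and n: "n \<ge> n1"
  shows "lyap pt (Suc n) \<le> lyap pt n - c0 * delta n - th * kappa * resid n"
proof -
  have nN0: "n \<ge> n0" and n2: "n \<ge> 2" and n1: "n \<ge> 1" using n n0_ge_1 by (auto simp: n1_def)
  note mi = phi_inertial_ineq[OF pt nN0]
  have am: "acoef n * phi pt n \<le> acoef (Suc n) * phi pt n"
    using acoef_mono[OF n1] phi_nonneg by (rule mult_right_mono)
  have fe: "c0 * delta n \<le> (Fcoef (n - 1) - Ecoef n) * delta n"
    using Fcoef_minus_Ecoef_ge[OF n2] delta_nonneg by (rule mult_right_mono)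
  have tk: "th * kappa * resid n \<le> theta n * kappa * resid n"
    using theta_bounds(1)[OF n1] kappa_pos resid_nonneg by (intro mult_right_mono) auto
  have e1: "acoef n * (phi pt n - phi pt (n - 1)) = acoef n * phi pt n - acoef n * phi pt (n - 1)"
    by (simp add: algebra_simps)
  have e2: "(Fcoef (n - 1) - Ecoef n) * delta n = Fcoef (n - 1) * delta n - Ecoef n * delta n"
    by (simp add: algebra_simps)
  show ?thesis using mi am fe tk e1 e2 unfolding lyap_def by simp
qed

lemma lyap_le_lyap_n1:
  assumes pt: "pt \<in> zeros_sum A B" shows "n \<ge> n1 \<Longrightarrow> lyap pt n \<le> lyap pt n1"
proof (induct n rule: nat_induct_at_least)
  case base then show ?case by simp
next
  case (Suc n)
  have "lyap pt (Suc n) \<le> lyap pt n - c0 * delta n - th * kappa * resid n"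
    by (rule lyap_Suc_le[OF pt Suc(1)])
  moreover have "c0 * delta n \<ge> 0" using c0_pos delta_nonneg by simp
  moreover have "th * kappa * resid n \<ge> 0" using th_pos kappa_pos resid_nonneg by simp
  ultimately show ?case using Suc(2) by linarith
qed

lemma lyap_ge: assumes "n \<ge> 2" shows "lyap pt n \<ge> - (acoef n * phi pt (n - 1))"
proof -
  have "Fcoef (n - 1) * delta n \<ge> 0" using Fcoef_nonneg[of "n - 1"] assms delta_nonneg by simp
  then show ?thesis using phi_nonneg[of pt n] unfolding lyap_def by linarith
qed

definition phi_bound :: "'a \<Rightarrow> real" where
  "phi_bound pt = max (phi pt n0) (max 0 (lyap pt n1 / (1 - amax)))"

lemma phi_le_bound:
  assumes pt: "pt \<in> zeros_sum A B" shows "n \<ge> n0 \<Longrightarrow> phi pt n \<le> phi_bound pt"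
proof (induct n rule: nat_induct_at_least)
  case base then show ?case by (simp add: phi_bound_def)
next
  case (Suc n)
  have sn: "Suc n \<ge> n1" "Suc n \<ge> 2" "Suc n \<ge> 1" using Suc(1) n0_ge_1 by (auto simp: n1_def)
  have M0: "phi_bound pt \<ge> 0" by (simp add: phi_bound_def)
  have "phi pt (Suc n) \<le> lyap pt (Suc n) + acoef (Suc n) * phi pt n"
    using Fcoef_nonneg[of n] Suc(1) n0_ge_1 delta_nonneg[of "Suc n"] unfolding lyap_def
    by (simp add: mult_nonneg_nonneg)
  also have "\<dots> \<le> lyap pt n1 + amax * phi_bound pt"
  proof -
    have "acoef (Suc n) * phi pt n \<le> amax * phi_bound pt"
      using acoef_bounds[OF sn(3)] Suc(2) phi_nonneg by (intro mult_mono) auto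
    then show ?thesis using lyap_le_lyap_n1[OF pt sn(1)] by linarith
  qed
  also have "\<dots> \<le> phi_bound pt"
  proof -
    have "lyap pt n1 / (1 - amax) \<le> phi_bound pt" by (simp add: phi_bound_def)
    then have "lyap pt n1 \<le> (1 - amax) * phi_bound pt" using amax_less_1 by (simp add: field_simps)
    then show ?thesis by (simp add: algebra_simps)
  qed
  finally show ?case .
qed

lemma sum_dissipation_le:
  assumes pt: "pt \<in> zeros_sum A B"
  shows "(\<Sum>j<k. c0 * delta (n1 + j) + th * kappa * resid (n1 + j))
    \<le> lyap pt n1 + amax * phi_bound pt"
proof -
  have tel: "lyap pt (n1 + k) + (\<Sum>j<k. c0 * delta (n1 + j) + th * kappa * resid (n1 + j))
      \<le> lyap pt n1" for k
  proof (induct k)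
    case 0 then show ?case by simp
  next
    case (Suc k)
    have "lyap pt (Suc (n1 + k))
        \<le> lyap pt (n1 + k) - c0 * delta (n1 + k) - th * kappa * resid (n1 + k)"
      by (rule lyap_Suc_le[OF pt]) simp
    then show ?case using Suc by simp
  qed
  have n2: "n1 + k \<ge> 2" using n0_ge_1 by (simp add: n1_def)
  have "acoef (n1 + k) * phi pt (n1 + k - 1) \<le> amax * phi_bound pt"
  proof (intro mult_mono)
    show "acoef (n1 + k) \<le> amax" using acoef_bounds[of "n1 + k"] n2 by simp
    show "phi pt (n1 + k - 1) \<le> phi_bound pt" using phi_le_bound[OF pt] by (simp add: n1_def)
  qed (use amax_nonneg phi_nonneg acoef_bounds n2 in auto)
  then have "lyap pt (n1 + k) \<ge> - (amax * phi_bound pt)" using lyap_ge[OF n2, of pt] by linarith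
  then show ?thesis using tel[of k] by linarith
qed


lemma summable_dissipation: "summable (\<lambda>j. delta (n1 + j))" "summable (\<lambda>j. resid (n1 + j))"
proof -
  obtain pt where pt: "pt \<in> zeros_sum A B" using C1 by blast
  define D where "D j = c0 * delta (n1 + j) + th * kappa * resid (n1 + j)" for j
  have D_nonneg: "c0 * delta (n1 + j) \<ge> 0" "th * kappa * resid (n1 + j) \<ge> 0" for j
    using c0_pos th_pos kappa_pos delta_nonneg resid_nonneg by simp_all
  have "summable D"
    using D_nonneg sum_dissipation_le[OF pt] unfolding D_def
    by (intro summable_if_lessThan_sums_bounded) (auto intro: add_nonneg_nonneg)
  have le: "delta (n1 + j) \<le> D j / c0" "resid (n1 + j) \<le> D j / (th * kappa)" for j
    using D_nonneg[of j] c0_pos th_pos kappa_pos by (simp_all add: D_def field_simps)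
  show "summable (\<lambda>j. delta (n1 + j))"
    by (rule summable_comparison_test'[OF summable_divide[OF \<open>summable D\<close>, of c0]])
      (simp add: delta_nonneg le)
  show "summable (\<lambda>j. resid (n1 + j))"
    by (rule summable_comparison_test'[OF summable_divide[OF \<open>summable D\<close>, of "th * kappa"]])
      (simp add: resid_nonneg le)
qed

lemma delta_tendsto_0: "delta \<longlonglongrightarrow> 0"
  using summable_LIMSEQ_zero[OF summable_dissipation(1)]
    by (simp add: LIMSEQ_offset[of _ n1] add.commute)

lemma resid_tendsto_0: "resid \<longlonglongrightarrow> 0"
  using summable_LIMSEQ_zero[OF summable_dissipation(2)]
    by (simp add: LIMSEQ_offset[of _ n1] add.commute)

lemma Ecoef_le: assumes n: "n \<ge> 1" shows "Ecoef n \<le> 4 + 1 / th"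
proof -
  note t = theta_bounds[OF n] and b = beta_bounds[OF n]
  have "(1 - theta n) * beta n * (1 + beta n) \<le> 1 * 1 * 2"
    using t b by (intro mult_mono) auto
  moreover have "rcoef n * beta n * (1 - beta n) \<le> rcoef n * 1 * 1"
    using t b rcoef_nonneg[OF n] by (intro mult_mono mult_nonneg_nonneg) auto
  moreover have "rcoef n \<le> 1 / th"
  proof -
    have "rcoef n \<le> 1 / theta n" using t by (simp add: rcoef_def divide_right_mono)
    also have "\<dots> \<le> 1 / th" using t th_pos by (intro divide_left_mono) auto
    finally show ?thesis .
  qed
  moreover have "2 * theta n \<le> 2" using t by simp
  ultimately show ?thesis unfolding Ecoef_def by linarith
qed

lemma phi_increment_le:
  assumes pt: "pt \<in> zeros_sum A B" and n: "n \<ge> n0"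
  shows "phi pt (Suc n) - phi pt n \<le> acoef n * (phi pt n - phi pt (n - 1)) + (4 + 1 / th) * delta n"
proof -
  have n1: "n \<ge> 1" using n n0_ge_1 by simp
  have "Fcoef n * delta (Suc n) \<ge> 0" using Fcoef_nonneg[OF n1] delta_nonneg by simp
  moreover have "theta n * kappa * resid n \<ge> 0" using theta_bounds[OF n1] kappa_pos resid_nonneg
    by simp
  moreover have "Ecoef n * delta n \<le> (4 + 1 / th) * delta n"
    using Ecoef_le[OF n1] delta_nonneg by (rule mult_right_mono)
  ultimately show ?thesis using phi_inertial_ineq[OF pt n] by linarith
qed

lemma dist_sq_convergent:
  assumes pt: "pt \<in> zeros_sum A B"
  shows "convergent (\<lambda>n. (norm (x n - pt))^2)"
proof -
  have "convergent (\<lambda>k. phi pt (n0 + k))"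
  proof (rule inertial_sequence_convergent[where \<alpha> = "\<lambda>k. acoef (n1 + k)" and a = amax])
    show "phi pt (n0 + Suc (Suc k)) - phi pt (n0 + Suc k)
        \<le> acoef (n1 + k) * (phi pt (n0 + Suc k) - phi pt (n0 + k)) + (4 + 1 / th) * delta (n1 + k)" for k
      using phi_increment_le[OF pt, of "n1 + k"] by (simp add: n1_def)
    show "0 \<le> acoef (n1 + k)" "acoef (n1 + k) \<le> amax" for k
      using acoef_bounds[of "n1 + k"] n0_ge_1 by (auto simp: n1_def)
    show "0 \<le> (4 + 1 / th) * delta (n1 + k)" for k using th_pos delta_nonneg by simp
    show "summable (\<lambda>k. (4 + 1 / th) * delta (n1 + k))" using summable_dissipation(1)
      by (rule summable_mult)
  qed (use amax_less_1 phi_nonneg in auto)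
  then obtain l where "(\<lambda>k. phi pt (k + n0)) \<longlonglongrightarrow> l" by (auto simp: convergent_def add.commute)
  then have "(\<lambda>n. phi pt n) \<longlonglongrightarrow> l" by (rule LIMSEQ_offset)
  then show ?thesis by (auto simp: convergent_def phi_def)
qed

lemma x_bounded: "bounded (range x)"
proof -
  obtain pt where "pt \<in> zeros_sum A B" using C1 by blast
  then obtain K where K: "\<And>n. (norm (x n - pt))^2 \<le> K"
    using convergent_imp_Bseq[OF dist_sq_convergent] by (auto simp: Bseq_def)
  then have "norm (x n - pt) \<le> sqrt K" for n by (rule real_le_rsqrt)
  then have "range x \<subseteq> cball pt (sqrt K)" by (auto simp: dist_norm norm_minus_commute)
  then show ?thesis using bounded_cball bounded_subset by blast
qed

lemma x_minus_y_tendsto_0: "(\<lambda>n. x n - y n) \<longlonglongrightarrow> 0"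
proof -
  have "(\<lambda>n. sqrt (delta n) + sqrt (resid n)) \<longlonglongrightarrow> sqrt 0 + sqrt 0"
    by (intro tendsto_intros delta_tendsto_0 resid_tendsto_0)
  then have lim: "(\<lambda>n. sqrt (delta n) + sqrt (resid n)) \<longlonglongrightarrow> 0" by simp
  have le: "norm (x n - y n) \<le> sqrt (delta n) + sqrt (resid n)" if "n \<ge> 1" for n
  proof -
    have "norm (x n - w n) = alpha n * norm (x n - x (n - 1))"
      using w_def[OF that] alpha_bounds[OF that] by simp
    also have "\<dots> \<le> sqrt (delta n)" using alpha_bounds[OF that]
      by (simp add: delta_def mult_left_le_one_le)
    finally show ?thesis
      using norm_triangle_ineq[of "x n - w n" "w n - y n"] by (simp add: resid_def)
  qed
  have "\<forall>\<^sub>F n in sequentially. norm (x n - y n) \<le> sqrt (delta n) + sqrt (resid n)"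
    using le eventually_sequentially by blast
  then show ?thesis using lim by (rule Lim_null_comparison)
qed

text \<open>Uses the resolvent inclusion: (w n - y n) / lam n - (A w n - A y n) \<in> (A + B) (y n).\<close>
lemma inner_graph_le:
  assumes "b \<in> B a" and n: "n \<ge> 1"
  shows "(A a + b) \<bullet> (y n - a) \<le> (1 / lam_min + L) * norm (w n - y n) * norm (y n - a)"
proof -
  obtain b' where b': "b' \<in> B (y n)" "w n - lam n *\<^sub>R A (w n) = y n + lam n *\<^sub>R b'"
    using y_resolvent[OF n] by blast
  have lam: "lam n > 0" "lam n \<ge> lam_min" using lam_pos[OF n] lam_ge_lam_min[OF n] by auto
  have "(b' - b) \<bullet> (y n - a) \<ge> 0"
    using C2_max b'(1) \<open>b \<in> B a\<close> unfolding maximal_monotone_def monotone_setop_def by blast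
  moreover have "(A (y n) - A a) \<bullet> (y n - a) \<ge> 0" using C2_mono unfolding monotone_op_def by blast
  ultimately have "(A a + b) \<bullet> (y n - a) \<le> (b' + A (y n)) \<bullet> (y n - a)"
    by (simp add: inner_diff_left inner_add_left)
  also have "\<dots> \<le> norm (b' + A (y n)) * norm (y n - a)" by (rule norm_cauchy_schwarz)
  also have "norm (b' + A (y n)) \<le> (1 / lam_min + L) * norm (w n - y n)"
  proof -
    have "lam n *\<^sub>R (b' + A (y n)) = (w n - y n) - lam n *\<^sub>R (A (w n) - A (y n))"
      using b'(2) by (simp add: algebra_simps)
    then have "lam n * norm (b' + A (y n)) \<le> norm (w n - y n) + lam n * norm (A (w n) - A (y n))"
      using norm_triangle_ineq4[of "w n - y n" "lam n *\<^sub>R (A (w n) - A (y n))"] lam(1)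
      by (metis abs_of_pos norm_scaleR)
    then have "norm (b' + A (y n)) \<le> norm (w n - y n) / lam n + norm (A (w n) - A (y n))"
      using lam(1) by (simp add: field_simps)
    also have "\<dots> \<le> norm (w n - y n) / lam_min + L * norm (w n - y n)"
      using A_lipschitz lam lam_min_pos by (intro add_mono divide_left_mono) auto
    finally show ?thesis by (simp add: algebra_simps)
  qed
  finally show ?thesis by (simp add: mult_right_mono)
qed

lemma tail_hull_points_in_zeros:
  assumes "tail_hull_point x S q"
  shows "q \<in> zeros_sum A B"
proof (rule mem_zeros_sum_if_monotonically_related[OF C2_max C2_lip])
  fix a b assume "b \<in> B a"
  obtain Rx Rd where Rx: "\<And>n. norm (x n) \<le> Rx" and Rd: "\<And>n. norm (x n - y n) \<le> Rd"
    using x_bounded convergent_imp_bounded[OF x_minus_y_tendsto_0] by (auto simp: bounded_iff)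
  have R: "norm (y n - a) \<le> Rx + Rd + norm a" for n
  proof -
    have "norm (y n) \<le> norm (x n) + norm (x n - y n)"
      using norm_triangle_ineq4[of "x n" "x n - y n"] by simp
    then show ?thesis using norm_triangle_ineq4[of "y n" a] Rx[of n] Rd[of n] by linarith
  qed
  define R where "R = Rx + Rd + norm a"
  define U where "U n = (1 / lam_min + L) * norm (w n - y n) * R + norm (A a + b) * norm (x n - y n)" for n
  have "(\<lambda>n. norm (w n - y n)) \<longlonglongrightarrow> 0"
    using tendsto_real_sqrt[OF resid_tendsto_0] by (simp add: resid_def)
  then have "U \<longlonglongrightarrow> (1 / lam_min + L) * 0 * R + norm (A a + b) * 0"
    unfolding U_def using x_minus_y_tendsto_0
      by (intro tendsto_intros) (simp_all add: tendsto_norm_zero_iff)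
  then have U: "U \<longlonglongrightarrow> 0" by simp
  have bound: "(A a + b) \<bullet> x n \<le> (A a + b) \<bullet> a + U n" if "n \<ge> 1" for n
  proof -
    have "(1 / lam_min + L) * norm (w n - y n) \<ge> 0" using lam_min_pos L_nonneg by simp
    then have "(1 / lam_min + L) * norm (w n - y n) * norm (y n - a) \<le> (1 / lam_min + L) * norm (w n - y n) * R"
      by (rule mult_left_mono[OF R[of n, folded R_def]])
    then have "(A a + b) \<bullet> (y n - a) \<le> (1 / lam_min + L) * norm (w n - y n) * R"
      using inner_graph_le[OF \<open>b \<in> B a\<close> that] by linarith
    moreover have "(A a + b) \<bullet> (x n - y n) \<le> norm (A a + b) * norm (x n - y n)"
      by (rule norm_cauchy_schwarz)
    ultimately show ?thesis by (simp add: U_def inner_diff_right)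
  qed
  have "(A a + b) \<bullet> q \<le> (A a + b) \<bullet> a"
  proof (rule tail_hull_point_inner_le[OF assms])
    fix e :: real assume "e > 0"
    then obtain N where N: "\<And>n. n \<ge> N \<Longrightarrow> U n < e"
      using order_tendstoD(2)[OF U] by (auto simp: eventually_sequentially)
    have "(A a + b) \<bullet> x n \<le> (A a + b) \<bullet> a + e" if "max N 1 \<le> n" for n
      using bound[of n] N[of n] that by simp
    then show "\<exists>N. \<forall>n\<in>S. N \<le> n \<longrightarrow> (A a + b) \<bullet> x n \<le> (A a + b) \<bullet> a + e" by blast
  qed
  then show "(A a + b) \<bullet> (a - q) \<ge> 0" by (simp add: inner_diff_right)
qed

theorem weak_conv_to_zero: "\<exists>q\<in>zeros_sum A B. weak_conv x q"
  by (rule opial_weak_conv[OF x_bounded dist_sq_convergent tail_hull_points_in_zeros])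

end

theorem theorem3p1:
  fixes A :: "'a::{real_inner, complete_space} \<Rightarrow> 'a"
    and B :: "'a \<Rightarrow> 'a set"
    and L mu eps bet th :: real
    and alpha beta theta mun p lam :: "nat \<Rightarrow> real"
    and x w z y :: "nat \<Rightarrow> 'a"
  assumes C1: "zeros_sum A B \<noteq> {}"
    and C2_lip: "L-lipschitz_on UNIV A"
    and C2_mono: "monotone_op A"
    and C2_max: "maximal_monotone B"
    and mu: "0 < mu" "mu < 1"
    and lam1: "lam 1 > 0"
    and mun_nonneg: "\<And>n. n \<ge> 1 \<Longrightarrow> mun n \<ge> 0"
    and p_nonneg: "\<And>n. n \<ge> 1 \<Longrightarrow> p n \<ge> 0"
    and eps: "eps > 1"
    and C3_i: "\<And>n. n \<ge> 1 \<Longrightarrow> 0 \<le> alpha n \<and> alpha n \<le> 1"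
    and C3_ii: "\<And>n. n \<ge> 1 \<Longrightarrow> 0 \<le> beta n \<and> beta n \<le> beta (Suc n) \<and> beta (Suc n) \<le> bet"
    and C3_ii_bet: "bet < (3 + 2 * eps - sqrt (8 * eps + 17)) / (2 * eps)"
    and C3_iii: "\<And>n. n \<ge> 1 \<Longrightarrow> 0 < th \<and> th < theta n \<and> theta n \<le> theta (Suc n)
                      \<and> theta (Suc n) \<le> 1 / (1 + eps)"
    and C3_iv: "\<And>n. n \<ge> 1 \<Longrightarrow>
        (1 - theta n) * beta n + theta n * alpha n
          \<le> (1 - theta (Suc n)) * beta (Suc n) + theta (Suc n) * alpha (Suc n)"
    and C3_v: "summable (\<lambda>n. p (Suc n))" "mun \<longlonglongrightarrow> 0"
    and w_def: "\<And>n. n \<ge> 1 \<Longrightarrow> w n = x n + alpha n *\<^sub>R (x n - x (n - 1))"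
    and z_def: "\<And>n. n \<ge> 1 \<Longrightarrow> z n = x n + beta n *\<^sub>R (x n - x (n - 1))"
    and y_def: "\<And>n. n \<ge> 1 \<Longrightarrow> y n = resolvent B (lam n) (w n - lam n *\<^sub>R A (w n))"
    and lam_def: "\<And>n. n \<ge> 1 \<Longrightarrow> lam (Suc n) =
        (if A (w n) \<noteq> A (y n)
         then min ((mun n + mu) * norm (w n - y n) / norm (A (w n) - A (y n))) (lam n + p n)
         else lam n + p n)"
    and nostop: "\<And>n. n \<ge> 1 \<Longrightarrow> w n \<noteq> y n"
    and x_def: "\<And>n. n \<ge> 1 \<Longrightarrow> x (Suc n) =
        (1 - theta n) *\<^sub>R z n + theta n *\<^sub>R (y n - lam n *\<^sub>R (A (y n) - A (w n)))"
  shows "\<exists>q\<in>zeros_sum A B. weak_conv x q"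
proof -
  interpret relaxed_inertial_fbf A B L mu eps bet th alpha beta theta mun p lam x w z y
    by (rule relaxed_inertial_fbf.intro[OF assms])
  show ?thesis by (rule weak_conv_to_zero)
qed

end
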